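(* Assume the root system is indecomposable. A Coxeter element $c \in W$ (a product of all simple reflections, each appearing exactly once, in some order) is rational if and only if the type of $W$ is $A_r$ ($r\ge1$) and $c \in \{C, C^{-1}\}$, where $C = s_1 s_2 \cdots s_r$ (simple roots of $A_r$ numbered along the Dynkin diagram). Moreover, for $r \geq 2$, $C$ and $C^{-1}$ have valency $1$ in $\Gamma(A_r)$: the only neighbor of $C$ is $s_r C$ and the only neighbor of $C^{-1}$ is $s_1 C^{-1}$.
   Context: $W$ is the Weyl group of a (reduced, crystallographic) root system $\Pi$ with simple roots $\Delta = \{\alpha_1,\dots,\alpha_r\}$, positive roots $\Pi_+$, simple reflections $s_i$. $\alpha \le \beta$ iff $\beta-\alpha$ is a nonnegative integer combination of simple roots. For $A\subseteq\Pi_+$, $\mathrm{Adj}(A) = \{\alpha\in\Pi_+ : \exists\beta\in A,\ \alpha\le\beta\}$. For $u\in W$: $\nu^0(u) = u(\Pi_+)\cap\Pi_+$, $\nu^k(u) = u(\mathrm{Adj}\,\nu^{k-1}(u))\cap\Pi_+$; the sequence is descending and eventually constant with value $\nu(u)$; $u$ is rational iff $\nu(u)=\emptyset$. The rationality graph $\Gamma(W)$ has the rational elements as vertices, $u,v$ adjacent iff $u = s_\alpha v$ for some simple $\alpha$. *)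

theory Defs
  imports "HOL-Analysis.Analysis"
begin

definition refl_vec :: "'a::euclidean_space \<Rightarrow> 'a \<Rightarrow> 'a" where
  "refl_vec \<alpha> x = x - (2 * (x \<bullet> \<alpha>) / (\<alpha> \<bullet> \<alpha>)) *\<^sub>R \<alpha>"

definition root_system :: "'a::euclidean_space set \<Rightarrow> bool" where
  "root_system R \<longleftrightarrow> finite R \<and> 0 \<notin> R \<and> span R = UNIV
     \<and> (\<forall>\<alpha>\<in>R. refl_vec \<alpha> ` R = R)
     \<and> (\<forall>\<alpha>\<in>R. \<forall>\<beta>\<in>R. 2 * (\<beta> \<bullet> \<alpha>) / (\<alpha> \<bullet> \<alpha>) \<in> \<int>)
     \<and> (\<forall>\<alpha>\<in>R. \<forall>t::real. t *\<^sub>R \<alpha> \<in> R \<longrightarrow> t = 1 \<or> t = -1)"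

definition indecomposable :: "'a::euclidean_space set \<Rightarrow> bool" where
  "indecomposable R \<longleftrightarrow> \<not> (\<exists>A B. A \<noteq> {} \<and> B \<noteq> {} \<and> A \<union> B = R
       \<and> (\<forall>a\<in>A. \<forall>b\<in>B. a \<bullet> b = 0))"

definition base :: "'a::euclidean_space set \<Rightarrow> 'a set \<Rightarrow> bool" where
  "base R \<Delta> \<longleftrightarrow> \<Delta> \<subseteq> R \<and> independent \<Delta> \<and>
     (\<forall>\<beta>\<in>R. \<exists>c::'a \<Rightarrow> int. \<beta> = (\<Sum>\<alpha>\<in>\<Delta>. of_int (c \<alpha>) *\<^sub>R \<alpha>)
        \<and> ((\<forall>\<alpha>\<in>\<Delta>. c \<alpha> \<ge> 0) \<or> (\<forall>\<alpha>\<in>\<Delta>. c \<alpha> \<le> 0)))"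

definition pos_roots :: "'a::euclidean_space set \<Rightarrow> 'a set \<Rightarrow> 'a set" where
  "pos_roots R \<Delta> = {\<beta>\<in>R. \<exists>c::'a \<Rightarrow> int. (\<forall>\<alpha>\<in>\<Delta>. c \<alpha> \<ge> 0)
        \<and> \<beta> = (\<Sum>\<alpha>\<in>\<Delta>. of_int (c \<alpha>) *\<^sub>R \<alpha>)}"

definition root_le :: "'a::euclidean_space set \<Rightarrow> 'a \<Rightarrow> 'a \<Rightarrow> bool" where
  "root_le \<Delta> \<alpha> \<beta> \<longleftrightarrow> (\<exists>c::'a \<Rightarrow> nat. \<beta> - \<alpha> = (\<Sum>\<gamma>\<in>\<Delta>. real (c \<gamma>) *\<^sub>R \<gamma>))"

inductive_set weyl :: "'a::euclidean_space set \<Rightarrow> ('a \<Rightarrow> 'a) set" for R where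
  weyl_id: "id \<in> weyl R"
| weyl_step: "u \<in> weyl R \<Longrightarrow> \<alpha> \<in> R \<Longrightarrow> refl_vec \<alpha> \<circ> u \<in> weyl R"

definition Adj :: "'a::euclidean_space set \<Rightarrow> 'a set \<Rightarrow> 'a set \<Rightarrow> 'a set" where
  "Adj R \<Delta> A = {\<alpha>\<in>pos_roots R \<Delta>. \<exists>\<beta>\<in>A. root_le \<Delta> \<alpha> \<beta>}"

fun nu_seq :: "'a::euclidean_space set \<Rightarrow> 'a set \<Rightarrow> ('a \<Rightarrow> 'a) \<Rightarrow> nat \<Rightarrow> 'a set" where
  "nu_seq R \<Delta> u 0 = u ` pos_roots R \<Delta> \<inter> pos_roots R \<Delta>"
| "nu_seq R \<Delta> u (Suc k) = u ` Adj R \<Delta> (nu_seq R \<Delta> u k) \<inter> pos_roots R \<Delta>"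

definition nu :: "'a::euclidean_space set \<Rightarrow> 'a set \<Rightarrow> ('a \<Rightarrow> 'a) \<Rightarrow> 'a set" where
  "nu R \<Delta> u = (THE S. \<exists>k0. \<forall>k\<ge>k0. nu_seq R \<Delta> u k = S)"

definition rational :: "'a::euclidean_space set \<Rightarrow> 'a set \<Rightarrow> ('a \<Rightarrow> 'a) \<Rightarrow> bool" where
  "rational R \<Delta> u \<longleftrightarrow> u \<in> weyl R \<and> nu R \<Delta> u = {}"

definition gamma_neighbors :: "'a::euclidean_space set \<Rightarrow> 'a set \<Rightarrow> ('a \<Rightarrow> 'a) \<Rightarrow> ('a \<Rightarrow> 'a) set" where
  "gamma_neighbors R \<Delta> v = {u. rational R \<Delta> u \<and> (\<exists>\<alpha>\<in>\<Delta>. u = refl_vec \<alpha> \<circ> v)}"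

definition refl_prod :: "'a::euclidean_space list \<Rightarrow> 'a \<Rightarrow> 'a" where
  "refl_prod xs = foldr (\<lambda>\<alpha> f. refl_vec \<alpha> \<circ> f) xs id"

definition coxeter_element :: "'a::euclidean_space set \<Rightarrow> ('a \<Rightarrow> 'a) \<Rightarrow> bool" where
  "coxeter_element \<Delta> c \<longleftrightarrow> (\<exists>xs. distinct xs \<and> set xs = \<Delta> \<and> c = refl_prod xs)"

definition cartan :: "'a::euclidean_space \<Rightarrow> 'a \<Rightarrow> real" where
  "cartan \<alpha> \<beta> = 2 * (\<alpha> \<bullet> \<beta>) / (\<beta> \<bullet> \<beta>)"

text \<open>A numbering \<alpha>_1,...,\<alpha>_r of the simple roots along a Dynkin diagram of type A_r:
  the number of bonds between nodes i and j (i \<noteq> j) is 1 if |i-j| = 1 and 0 otherwise.\<close>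
definition typeA_numbering :: "'a::euclidean_space set \<Rightarrow> (nat \<Rightarrow> 'a) \<Rightarrow> bool" where
  "typeA_numbering \<Delta> f \<longleftrightarrow> bij_betw f {1..card \<Delta>} \<Delta> \<and>
     (\<forall>i\<in>{1..card \<Delta>}. \<forall>j\<in>{1..card \<Delta>}. i \<noteq> j \<longrightarrow>
        cartan (f i) (f j) * cartan (f j) (f i) = (if i = j + 1 \<or> j = i + 1 then 1 else 0))"

definition coxC :: "'a::euclidean_space set \<Rightarrow> (nat \<Rightarrow> 'a) \<Rightarrow> 'a \<Rightarrow> 'a" where
  "coxC \<Delta> f = refl_prod (map f [1..<card \<Delta> + 1])"

end

theory Submission
  imports Defs
begin

text \<open>
  Apply the letters of a Coxeter word \<open>c = s\<^sub>x\<^sub>1 \<cdots> s\<^sub>x\<^sub>n\<close> one by one to a simple root and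
  follow its coordinates in the base: a reflection \<open>s\<^sub>y\<close> applied to a vector with nonnegative
  coordinates and vanishing \<open>y\<close>-coordinate only raises that coordinate, by at least the
  coordinates at the neighbours of \<open>y\<close>. One reads off: if a letter \<open>p\<close> has two later
  neighbours or a multiple bond to a later one, then \<open>p \<le> c(p)\<close>; if it has two earlier
  neighbours \<open>q\<^sub>1, q\<^sub>2\<close>, then \<open>q\<^sub>2 \<le> c(q\<^sub>1)\<close> and \<open>q\<^sub>1 \<le> c(q\<^sub>2)\<close>. Either way a nonempty set of
  positive roots lies below its own image and survives in every \<open>\<nu>\<^sup>k(c)\<close>.
  So for rational \<open>c\<close> the Dynkin diagram, connected by indecomposability, is a simply laced
  path traversed in the order of the word: the type is \<open>A\<^sub>r\<close> and \<open>c = C\<close> for a suitable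
  numbering (and \<open>C\<^sup>-\<^sup>1\<close> is \<open>C\<close> for the reversed numbering).

  Conversely \<open>C\<close> acts on coordinates by \<open>\<gamma>\<^sub>k \<mapsto> \<gamma>\<^sub>k\<^sub>-\<^sub>1 - \<gamma>\<^sub>r\<close> (with \<open>\<gamma>\<^sub>0 = 0\<close>). Positivity
  of the image forces \<open>\<gamma>\<^sub>r = 0\<close>, so each step of the \<open>\<nu>\<close>-sequence of \<open>C\<close>, and likewise of
  \<open>s\<^sub>r C\<close>, makes one more leading coordinate vanish. For \<open>i < r\<close> instead \<open>s\<^sub>i C\<close> maps \<open>\<alpha>\<^sub>i\<close>
  to \<open>\<alpha>\<^sub>i + \<alpha>\<^sub>i\<^sub>+\<^sub>1\<close>, so \<open>s\<^sub>r C\<close> is the only rational neighbour of \<open>C\<close>.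
\<close>

section \<open>Reflections and Coxeter words\<close>

lemma refl_vec_eq: "refl_vec a x = x - cartan x a *\<^sub>R a"
  by (simp add: refl_vec_def cartan_def)

lemma cartan_self: "a \<noteq> 0 \<Longrightarrow> cartan a a = 2"
  by (simp add: cartan_def)

lemma refl_vec_refl_vec: "a \<noteq> 0 \<Longrightarrow> refl_vec a (refl_vec a x) = x"
  unfolding refl_vec_def by (simp add: inner_diff_left algebra_simps)

lemma inner_refl_vec_self: "a \<noteq> 0 \<Longrightarrow> refl_vec a x \<bullet> a = - (x \<bullet> a)"
  unfolding refl_vec_def by (simp add: inner_diff_left)

lemma refl_prod_Nil [simp]: "refl_prod [] = id"
  by (simp add: refl_prod_def)

lemma refl_prod_Cons [simp]: "refl_prod (x # xs) = refl_vec x \<circ> refl_prod xs"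
  by (simp add: refl_prod_def)

lemma refl_prod_append: "refl_prod (xs @ ys) = refl_prod xs \<circ> refl_prod ys"
  by (induction xs) auto

lemma refl_prod_comp_rev: "0 \<notin> set xs \<Longrightarrow> refl_prod xs \<circ> refl_prod (rev xs) = id"
proof (induction xs)
  case (Cons x xs)
  have "refl_prod (x # xs) \<circ> refl_prod (rev (x # xs)) =
        refl_vec x \<circ> (refl_prod xs \<circ> refl_prod (rev xs)) \<circ> refl_vec x"
    by (simp add: refl_prod_append comp_assoc)
  also have "\<dots> = id" using Cons by (auto simp: refl_vec_refl_vec fun_eq_iff)
  finally show ?case .
qed simp

lemma inv_refl_prod: "0 \<notin> set xs \<Longrightarrow> inv (refl_prod xs) = refl_prod (rev xs)"
  using refl_prod_comp_rev[of xs] refl_prod_comp_rev[of "rev xs"] by (intro inv_unique_comp) auto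

lemma refl_prod_in_weyl: "set xs \<subseteq> R \<Longrightarrow> refl_prod xs \<in> weyl R"
  by (induction xs) (auto intro: weyl.intros)

lemma weyl_image_roots:
  assumes "root_system R" and "u \<in> weyl R" shows "u ` R \<subseteq> R"
  using assms(2)
proof induction
  case (weyl_step u \<alpha>)
  then show ?case using assms(1) unfolding root_system_def by fastforce
qed simp

section \<open>Connected graphs\<close>

definition connected_graph :: "'v set \<Rightarrow> ('v \<Rightarrow> 'v \<Rightarrow> bool) \<Rightarrow> bool" where
  "connected_graph V E \<longleftrightarrow> (\<forall>I \<subseteq> V. I \<noteq> {} \<longrightarrow> I \<noteq> V \<longrightarrow> (\<exists>i\<in>I. \<exists>j\<in>V - I. E i j))"

lemma connected_graphD:
  "connected_graph V E \<Longrightarrow> I \<subseteq> V \<Longrightarrow> I \<noteq> {} \<Longrightarrow> I \<noteq> V \<Longrightarrow> \<exists>i\<in>I. \<exists>j\<in>V - I. E i j"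
  unfolding connected_graph_def by blast

lemma connected_graph_reindex:
  assumes "inj_on g V" and "connected_graph (g ` V) E"
  shows "connected_graph V (\<lambda>i j. E (g i) (g j))"
  unfolding connected_graph_def
proof (intro allI impI)
  fix I assume I: "I \<subseteq> V" "I \<noteq> {}" "I \<noteq> V"
  have "g ` I \<noteq> g ` V" using I assms(1) by (metis inj_on_image_eq_iff order_refl)
  then obtain a b where "a \<in> g ` I" "b \<in> g ` V - g ` I" "E a b"
    using assms(2) I unfolding connected_graph_def by (meson image_is_empty image_mono)
  then show "\<exists>i\<in>I. \<exists>j\<in>V - I. E (g i) (g j)" by blast
qed

lemma connected_graph_edge_to:
  assumes "connected_graph V E" and "v \<in> V" and "V - {v} \<noteq> {}"
  shows "\<exists>a\<in>V - {v}. E a v"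
proof -
  have "V - {v} \<noteq> V" using assms(2) by blast
  then obtain a b where "a \<in> V - {v}" "b \<in> V - (V - {v})" "E a b"
    using connected_graphD[OF assms(1) Diff_subset assms(3)] by blast
  moreover have "V - (V - {v}) = {v}" using assms(2) by blast
  ultimately show ?thesis by blast
qed

lemma connected_graph_Diff_leaf:
  assumes conn: "connected_graph V E" and v: "v \<in> V"
    and leaf: "\<And>b. b \<in> V - {v} \<Longrightarrow> E b v \<or> E v b \<Longrightarrow> b = a"
  shows "connected_graph (V - {v}) E"
  unfolding connected_graph_def
proof (intro allI impI)
  fix I assume I: "I \<subseteq> V - {v}" "I \<noteq> {}" "I \<noteq> V - {v}"
  define I' where "I' = (if a \<in> I then insert v I else I)"
  have "I' \<subseteq> V" "I' \<noteq> {}" using I v by (auto simp: I'_def)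
  moreover have "I' \<noteq> V"
  proof
    assume "I' = V"
    moreover obtain z where "z \<in> V - {v} - I" using I by blast
    ultimately show False by (auto simp: I'_def split: if_splits)
  qed
  ultimately obtain i j where ij: "i \<in> I'" "j \<in> V - I'" "E i j"
    using connected_graphD[OF conn] by blast
  consider "i = v" | "j = v" | "i \<in> I" "j \<in> V - {v} - I"
    using ij I by (auto simp: I'_def split: if_splits)
  then show "\<exists>i\<in>I. \<exists>j\<in>V - {v} - I. E i j"
  proof cases
    case 1
    then show ?thesis using ij leaf[of j] by (auto simp: I'_def split: if_splits)
  next
    case 2
    then show ?thesis using ij leaf[of i] I by (auto simp: I'_def split: if_splits)
  qed (use ij in blast)
qed

lemma connected_graph_path:
  fixes E :: "nat \<Rightarrow> nat \<Rightarrow> bool"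
  assumes "connected_graph {..<n} E" and sym: "\<And>i j. E i j \<longleftrightarrow> E j i"
    and up: "\<And>i j k. i < j \<Longrightarrow> i < k \<Longrightarrow> j < n \<Longrightarrow> k < n \<Longrightarrow> E i j \<Longrightarrow> E i k \<Longrightarrow> j = k"
    and down: "\<And>i j k. j < i \<Longrightarrow> k < i \<Longrightarrow> i < n \<Longrightarrow> E j i \<Longrightarrow> E k i \<Longrightarrow> j = k"
    and "i < n" "j < n" "i \<noteq> j"
  shows "E i j \<longleftrightarrow> i = j + 1 \<or> j = i + 1"
proof -
  txt \<open>The top vertex is a leaf whose neighbour must be its predecessor.\<close>
  have "E i j \<longleftrightarrow> i = j + 1 \<or> j = i + 1"
    if "m \<le> n" "connected_graph {..<m} E" "i < m" "j < m" "i \<noteq> j" for m i j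
    using that
  proof (induction m arbitrary: i j)
    case (Suc m)
    show ?case
    proof (cases "m = 0")
      case True
      then show ?thesis using Suc.prems(3-5) by linarith
    next
      case False
      then have "0 \<in> {..<Suc m} - {m}" by simp
      then obtain a where "a \<in> {..<Suc m} - {m}" "E a m"
        using connected_graph_edge_to[OF Suc.prems(2), of m] by blast
      then have a: "a < m" "E a m" by auto
      have leaf: "b = a" if "b < m" "E b m" for b
        using down[OF that(1) a(1) _ that(2) a(2)] Suc.prems(1) by simp
      have "connected_graph ({..<Suc m} - {m}) E"
      proof (rule connected_graph_Diff_leaf[OF Suc.prems(2), of m a])
        fix b assume "b \<in> {..<Suc m} - {m}" "E b m \<or> E m b"
        then show "b = a" using leaf[of b] sym[of b m] by simp
      qed simp
      moreover have "{..<Suc m} - {m} = {..<m}" by auto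
      ultimately have path: "E i j \<longleftrightarrow> i = j + 1 \<or> j = i + 1" if "i < m" "j < m" "i \<noteq> j" for i j
        using Suc.IH[of i j] Suc.prems(1) that by simp
      have "a = m - 1"
      proof (rule ccontr)
        assume "a \<noteq> m - 1"
        then have "a + 1 < m" using a(1) by simp
        then show False using up[of a "a + 1" m] path[of a "a + 1"] a Suc.prems(1) by simp
      qed
      then have top: "E b m \<longleftrightarrow> m = b + 1" if "b < m" for b
        using leaf[OF that] a by auto
      show ?thesis
        using Suc.prems(3-5) path top[of i] top[of j] sym[of i j] by (cases "i = m \<or> j = m") auto
    qed
  qed simp
  then show ?thesis using assms(1,5-) by blast
qed

lemma split_list_nth2:
  assumes "i < j" "j < length xs"
  shows "\<exists>A B C. xs = A @ xs ! i # B @ xs ! j # C"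
proof -
  have "xs = take j xs @ xs ! j # drop (Suc j) xs" using assms(2) by (rule id_take_nth_drop)
  moreover have "take j xs = take i (take j xs) @ xs ! i # drop (Suc i) (take j xs)"
    using assms id_take_nth_drop[of i "take j xs"] by simp
  ultimately show ?thesis by (metis append.assoc append_Cons)
qed

lemma split_list_nth3:
  assumes "i < j" "j < k" "k < length xs"
  shows "\<exists>A B C D. xs = A @ xs ! i # B @ xs ! j # C @ xs ! k # D"
proof -
  have "xs = take k xs @ xs ! k # drop (Suc k) xs" using assms(3) by (rule id_take_nth_drop)
  moreover obtain A B C where "take k xs = A @ xs ! i # B @ xs ! j # C"
    using split_list_nth2[of i j "take k xs"] assms by auto
  ultimately show ?thesis by (metis append.assoc append_Cons)
qed

lemma nth_in_set_drop:
  assumes "i < j" "j < length xs"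
  shows "xs ! j \<in> set (drop (Suc i) xs)"
proof -
  have "drop (Suc i) xs ! (j - Suc i) = xs ! j" "j - Suc i < length (drop (Suc i) xs)"
    using assms by auto
  then show ?thesis by (metis nth_mem)
qed

lemma typeA_numbering_nth:
  fixes \<Delta> :: "'a::euclidean_space set"
  assumes xs: "distinct xs" "set xs = \<Delta>"
    and bonds: "\<And>i j. i < length xs \<Longrightarrow> j < length xs \<Longrightarrow> i \<noteq> j \<Longrightarrow>
      cartan (xs ! i) (xs ! j) * cartan (xs ! j) (xs ! i) = (if i = j + 1 \<or> j = i + 1 then 1 else 0)"
  shows "typeA_numbering \<Delta> (\<lambda>i. xs ! (i - 1))" and "coxC \<Delta> (\<lambda>i. xs ! (i - 1)) = refl_prod xs"
proof -
  have card: "card \<Delta> = length xs" using xs distinct_card by blast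
  have "bij_betw (\<lambda>i. i - 1) {1..length xs} {..<length xs}"
    by (rule bij_betw_byWitness[where f' = Suc]) auto
  moreover have "bij_betw ((!) xs) {..<length xs} \<Delta>" using xs by (simp add: bij_betw_nth)
  ultimately have "bij_betw (\<lambda>i. xs ! (i - 1)) {1..card \<Delta>} \<Delta>"
    using bij_betw_trans by (fastforce simp: card comp_def)
  moreover have "cartan (xs ! (i - 1)) (xs ! (j - 1)) * cartan (xs ! (j - 1)) (xs ! (i - 1))
      = (if i = j + 1 \<or> j = i + 1 then 1 else 0)"
    if "i \<in> {1..card \<Delta>}" "j \<in> {1..card \<Delta>}" "i \<noteq> j" for i j
  proof -
    have "i - 1 = j - 1 + 1 \<or> j - 1 = i - 1 + 1 \<longleftrightarrow> i = j + 1 \<or> j = i + 1" using that by auto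
    then show ?thesis using bonds[of "i - 1" "j - 1"] that card by auto
  qed
  ultimately show "typeA_numbering \<Delta> (\<lambda>i. xs ! (i - 1))"
    unfolding typeA_numbering_def by blast
  have "map (\<lambda>i. xs ! (i - 1)) [1..<card \<Delta> + 1] = xs"
    by (rule nth_equalityI) (simp_all add: card nth_upt del: upt_Suc)
  then show "coxC \<Delta> (\<lambda>i. xs ! (i - 1)) = refl_prod xs" by (simp add: coxC_def)
qed

section \<open>Coordinates with respect to a base\<close>

locale based_root_system =
  fixes R \<Delta> :: "'a::euclidean_space set"
  assumes root_system: "root_system R" and base: "base R \<Delta>"
begin

lemma finite_roots: "finite R"
  using root_system by (simp add: root_system_def)

lemma root_nonzero: "\<alpha> \<in> R \<Longrightarrow> \<alpha> \<noteq> 0"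
  using root_system by (auto simp: root_system_def)

lemma refl_vec_root: "\<alpha> \<in> R \<Longrightarrow> \<beta> \<in> R \<Longrightarrow> refl_vec \<alpha> \<beta> \<in> R"
  using root_system unfolding root_system_def by blast

lemma cartan_root_Ints: "\<alpha> \<in> R \<Longrightarrow> \<beta> \<in> R \<Longrightarrow> cartan \<beta> \<alpha> \<in> \<int>"
  using root_system unfolding root_system_def cartan_def by blast

lemma uminus_root: "\<beta> \<in> R \<Longrightarrow> - \<beta> \<in> R"
  using refl_vec_root[of \<beta> \<beta>] root_nonzero[of \<beta>] by (simp add: refl_vec_eq cartan_self scaleR_2)

lemma simple_roots_subset: "\<Delta> \<subseteq> R"
  using base by (simp add: base_def)

lemma simple_root_nonzero: "\<alpha> \<in> \<Delta> \<Longrightarrow> \<alpha> \<noteq> 0"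
  using simple_roots_subset root_nonzero by auto

lemma finite_simple_roots: "finite \<Delta>"
  using simple_roots_subset finite_roots finite_subset by blast

lemma independent_simple_roots: "independent \<Delta>"
  using base by (simp add: base_def)

lemma base_expansion:
  "\<beta> \<in> R \<Longrightarrow> \<exists>c::'a \<Rightarrow> int. \<beta> = (\<Sum>\<alpha>\<in>\<Delta>. of_int (c \<alpha>) *\<^sub>R \<alpha>)
      \<and> ((\<forall>\<alpha>\<in>\<Delta>. c \<alpha> \<ge> 0) \<or> (\<forall>\<alpha>\<in>\<Delta>. c \<alpha> \<le> 0))"
  using base unfolding base_def by blast

lemma span_simple_roots [simp]: "v \<in> span \<Delta>"
proof -
  have "R \<subseteq> span \<Delta>"
    using base_expansion by (fastforce intro: span_sum span_scale span_base)
  then have "span R \<subseteq> span \<Delta>" by (simp add: span_minimal)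
  then show ?thesis using root_system unfolding root_system_def by auto
qed

abbreviation coef :: "'a \<Rightarrow> 'a \<Rightarrow> real" where
  "coef v \<equiv> representation \<Delta> v"

lemma coef_expansion: "(\<Sum>\<alpha>\<in>\<Delta>. coef v \<alpha> *\<^sub>R \<alpha>) = v"
  by (simp add: real_vector.sum_representation_eq independent_simple_roots finite_simple_roots)

lemma coef_diff [simp]: "coef (v - w) \<gamma> = coef v \<gamma> - coef w \<gamma>"
  by (simp add: real_vector.representation_diff independent_simple_roots)

lemma coef_uminus [simp]: "coef (- v) \<gamma> = - coef v \<gamma>"
  by (simp add: real_vector.representation_neg independent_simple_roots)

lemma coef_scaleR [simp]: "coef (t *\<^sub>R v) \<gamma> = t * coef v \<gamma>"
  by (simp add: real_vector.representation_scale independent_simple_roots)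

lemma coef_simple_root: "\<alpha> \<in> \<Delta> \<Longrightarrow> coef \<alpha> \<gamma> = (if \<gamma> = \<alpha> then 1 else 0)"
  by (simp add: real_vector.representation_basis independent_simple_roots)

lemma coef_sum: "\<gamma> \<in> \<Delta> \<Longrightarrow> coef (\<Sum>\<alpha>\<in>\<Delta>. c \<alpha> *\<^sub>R \<alpha>) \<gamma> = c \<gamma>"
  by (simp add: real_vector.representation_sum independent_simple_roots coef_simple_root
      if_distrib[of "(*) _"] finite_simple_roots cong: if_cong)

lemma eq_0_if_coef_eq_0: "(\<And>\<gamma>. \<gamma> \<in> \<Delta> \<Longrightarrow> coef v \<gamma> = 0) \<Longrightarrow> v = 0"
  using coef_expansion[of v] by simp

lemma root_coef:
  assumes "\<beta> \<in> R"
  shows "(\<forall>\<alpha>\<in>\<Delta>. coef \<beta> \<alpha> \<in> \<int>) \<and> ((\<forall>\<alpha>\<in>\<Delta>. coef \<beta> \<alpha> \<ge> 0) \<or> (\<forall>\<alpha>\<in>\<Delta>. coef \<beta> \<alpha> \<le> 0))"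
proof -
  obtain c :: "'a \<Rightarrow> int" where c: "\<beta> = (\<Sum>\<alpha>\<in>\<Delta>. of_int (c \<alpha>) *\<^sub>R \<alpha>)"
      "(\<forall>\<alpha>\<in>\<Delta>. c \<alpha> \<ge> 0) \<or> (\<forall>\<alpha>\<in>\<Delta>. c \<alpha> \<le> 0)"
    using base_expansion[OF assms] by blast
  then have "\<forall>\<alpha>\<in>\<Delta>. coef \<beta> \<alpha> = of_int (c \<alpha>)" using coef_sum by simp
  then show ?thesis using c(2) by auto
qed

abbreviation pos :: "'a set" where
  "pos \<equiv> pos_roots R \<Delta>"

lemma pos_roots_eq: "pos = {\<beta>\<in>R. \<forall>\<alpha>\<in>\<Delta>. coef \<beta> \<alpha> \<ge> 0}"
proof (intro set_eqI iffI)
  fix \<beta> assume "\<beta> \<in> pos"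
  then obtain c :: "'a \<Rightarrow> int" where "\<beta> \<in> R" "\<forall>\<alpha>\<in>\<Delta>. c \<alpha> \<ge> 0" "\<beta> = (\<Sum>\<alpha>\<in>\<Delta>. of_int (c \<alpha>) *\<^sub>R \<alpha>)"
    unfolding pos_roots_def by blast
  then show "\<beta> \<in> {\<beta>\<in>R. \<forall>\<alpha>\<in>\<Delta>. coef \<beta> \<alpha> \<ge> 0}" by (simp add: coef_sum)
next
  fix \<beta> assume \<beta>: "\<beta> \<in> {\<beta>\<in>R. \<forall>\<alpha>\<in>\<Delta>. coef \<beta> \<alpha> \<ge> 0}"
  then obtain c :: "'a \<Rightarrow> int" where c: "\<beta> = (\<Sum>\<alpha>\<in>\<Delta>. of_int (c \<alpha>) *\<^sub>R \<alpha>)"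
    using base_expansion by blast
  have "\<forall>\<alpha>\<in>\<Delta>. c \<alpha> \<ge> 0" using \<beta> coef_sum[of _ "\<lambda>\<alpha>. of_int (c \<alpha>)"] by (simp flip: c)
  then show "\<beta> \<in> pos" using \<beta> c unfolding pos_roots_def by blast
qed

lemma pos_roots_subset: "pos \<subseteq> R"
  by (auto simp: pos_roots_eq)

lemma pos_root_coef_nonneg: "\<beta> \<in> pos \<Longrightarrow> \<gamma> \<in> \<Delta> \<Longrightarrow> coef \<beta> \<gamma> \<ge> 0"
  by (simp add: pos_roots_eq)

lemma pos_rootI: "\<beta> \<in> R \<Longrightarrow> \<gamma> \<in> \<Delta> \<Longrightarrow> coef \<beta> \<gamma> > 0 \<Longrightarrow> \<beta> \<in> pos"
  using root_coef[of \<beta>] by (force simp: pos_roots_eq)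

lemma uminus_pos_root: "\<beta> \<in> R \<Longrightarrow> \<beta> \<notin> pos \<Longrightarrow> - \<beta> \<in> pos"
  using root_coef[of \<beta>] uminus_root[of \<beta>] by (force simp: pos_roots_eq)

lemma simple_roots_subset_pos: "\<Delta> \<subseteq> pos"
  using simple_roots_subset by (auto simp: pos_roots_eq coef_simple_root)

lemma finite_pos_roots: "finite pos"
  using pos_roots_subset finite_roots finite_subset by blast

lemma root_le_coef:
  assumes "root_le \<Delta> \<alpha> \<beta>" and "\<gamma> \<in> \<Delta>"
  shows "coef \<alpha> \<gamma> \<le> coef \<beta> \<gamma>"
proof -
  obtain c :: "'a \<Rightarrow> nat" where "\<beta> - \<alpha> = (\<Sum>\<gamma>\<in>\<Delta>. real (c \<gamma>) *\<^sub>R \<gamma>)"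
    using assms(1) unfolding root_le_def by blast
  then have "coef \<beta> \<gamma> - coef \<alpha> \<gamma> = real (c \<gamma>)"
    using coef_sum[OF assms(2)] by (metis coef_diff)
  then show ?thesis by simp
qed

lemma root_leI:
  assumes "\<alpha> \<in> R" "\<beta> \<in> R" "\<And>\<gamma>. \<gamma> \<in> \<Delta> \<Longrightarrow> coef \<alpha> \<gamma> \<le> coef \<beta> \<gamma>"
  shows "root_le \<Delta> \<alpha> \<beta>"
proof -
  define c where "c \<gamma> = nat \<lfloor>coef \<beta> \<gamma> - coef \<alpha> \<gamma>\<rfloor>" for \<gamma>
  have "real (c \<gamma>) = coef (\<beta> - \<alpha>) \<gamma>" if "\<gamma> \<in> \<Delta>" for \<gamma>
  proof -
    have "coef \<beta> \<gamma> - coef \<alpha> \<gamma> \<in> \<int>" using root_coef assms(1,2) that by auto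
    then show ?thesis using assms(3)[OF that] by (auto simp: c_def elim: Ints_cases)
  qed
  then have "\<beta> - \<alpha> = (\<Sum>\<gamma>\<in>\<Delta>. real (c \<gamma>) *\<^sub>R \<gamma>)"
    using coef_expansion[of "\<beta> - \<alpha>"] by (metis (no_types, lifting) sum.cong)
  then show ?thesis unfolding root_le_def by blast
qed

lemma Adj_subset_pos: "Adj R \<Delta> A \<subseteq> pos"
  by (auto simp: Adj_def)

lemma Adj_mono: "A \<subseteq> B \<Longrightarrow> Adj R \<Delta> A \<subseteq> Adj R \<Delta> B"
  by (auto simp: Adj_def)

lemma inner_expansion: "v \<bullet> w = (\<Sum>\<alpha>\<in>\<Delta>. coef v \<alpha> * (\<alpha> \<bullet> w))"
  by (subst coef_expansion[of v, symmetric]) (simp add: inner_sum_left)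

lemma cartan_expansion: "cartan v w = (\<Sum>\<alpha>\<in>\<Delta>. coef v \<alpha> * cartan \<alpha> w)"
  unfolding cartan_def inner_expansion[of v]
  by (simp add: sum_distrib_left sum_divide_distrib mult.left_commute)

lemma coef_refl_vec:
  "\<alpha> \<in> \<Delta> \<Longrightarrow> coef (refl_vec \<alpha> v) \<gamma> = coef v \<gamma> - (if \<gamma> = \<alpha> then cartan v \<alpha> else 0)"
  by (simp add: refl_vec_eq coef_simple_root)

lemma coef_refl_vec_other: "\<alpha> \<in> \<Delta> \<Longrightarrow> \<gamma> \<noteq> \<alpha> \<Longrightarrow> coef (refl_vec \<alpha> v) \<gamma> = coef v \<gamma>"
  by (simp add: coef_refl_vec)

lemma coef_refl_vec_self:
  assumes "\<alpha> \<in> \<Delta>"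
  shows "coef (refl_vec \<alpha> v) \<alpha> = - coef v \<alpha> + (\<Sum>\<gamma>\<in>\<Delta> - {\<alpha>}. coef v \<gamma> * - cartan \<gamma> \<alpha>)"
proof -
  have "cartan v \<alpha> = 2 * coef v \<alpha> + (\<Sum>\<gamma>\<in>\<Delta> - {\<alpha>}. coef v \<gamma> * cartan \<gamma> \<alpha>)"
    using cartan_expansion[of v \<alpha>] cartan_self[OF simple_root_nonzero[OF assms]]
      sum.remove[OF finite_simple_roots assms, of "\<lambda>\<gamma>. coef v \<gamma> * cartan \<gamma> \<alpha>"] by simp
  then show ?thesis using coef_refl_vec[OF assms, of v \<alpha>] by (simp add: sum_negf)
qed

lemma cartan_eq_0_iff: "\<beta> \<in> R \<Longrightarrow> cartan \<alpha> \<beta> = 0 \<longleftrightarrow> \<alpha> \<bullet> \<beta> = 0"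
  using root_nonzero[of \<beta>] by (auto simp: cartan_def)

lemma simple_roots_diff_notin_roots:
  assumes "\<alpha> \<in> \<Delta>" "\<beta> \<in> \<Delta>" "\<alpha> \<noteq> \<beta>"
  shows "\<alpha> - \<beta> \<notin> R"
proof
  assume "\<alpha> - \<beta> \<in> R"
  moreover have "coef (\<alpha> - \<beta>) \<alpha> = 1" "coef (\<alpha> - \<beta>) \<beta> = -1"
    using assms by (auto simp: coef_simple_root)
  ultimately show False using root_coef[of "\<alpha> - \<beta>"] assms by force
qed

lemma cartan_mult_cartan_less_4:
  assumes a: "\<alpha> \<in> \<Delta>" and b: "\<beta> \<in> \<Delta>" and ne: "\<alpha> \<noteq> \<beta>"
  shows "cartan \<alpha> \<beta> * cartan \<beta> \<alpha> < 4"
proof -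
  have "\<bar>\<alpha> \<bullet> \<beta>\<bar> \<noteq> norm \<alpha> * norm \<beta>"
  proof
    assume "\<bar>\<alpha> \<bullet> \<beta>\<bar> = norm \<alpha> * norm \<beta>"
    then have "norm \<alpha> *\<^sub>R \<beta> = norm \<beta> *\<^sub>R \<alpha> \<or> norm \<alpha> *\<^sub>R \<beta> = - norm \<beta> *\<^sub>R \<alpha>"
      by (simp add: norm_cauchy_schwarz_abs_eq)
    then have "norm \<beta> = 0"
      using a b ne by (auto dest!: arg_cong[where f = "\<lambda>v. coef v \<alpha>"] simp: coef_simple_root)
    then show False using simple_root_nonzero[OF b] by simp
  qed
  then have "\<bar>\<alpha> \<bullet> \<beta>\<bar> < norm \<alpha> * norm \<beta>" using Cauchy_Schwarz_ineq2[of \<alpha> \<beta>] by simp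
  then have "(\<alpha> \<bullet> \<beta>)\<^sup>2 < (\<alpha> \<bullet> \<alpha>) * (\<beta> \<bullet> \<beta>)"
    by (metis abs_ge_zero dot_square_norm power2_abs power_mult_distrib power_strict_mono zero_less_numeral)
  moreover have "\<alpha> \<bullet> \<alpha> > 0" "\<beta> \<bullet> \<beta> > 0" using a b simple_root_nonzero by auto
  ultimately show ?thesis
    by (simp add: cartan_def power2_eq_square inner_commute divide_less_eq mult.commute)
qed

lemma inner_simple_roots_nonpos:
  assumes a: "\<alpha> \<in> \<Delta>" and b: "\<beta> \<in> \<Delta>" and ne: "\<alpha> \<noteq> \<beta>"
  shows "\<alpha> \<bullet> \<beta> \<le> 0"
proof (rule ccontr)
  assume "\<not> \<alpha> \<bullet> \<beta> \<le> 0"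
  have aR: "\<alpha> \<in> R" and bR: "\<beta> \<in> R" using a b simple_roots_subset by auto
  obtain k1 where k1: "cartan \<alpha> \<beta> = of_int k1" using cartan_root_Ints[OF bR aR] by (auto elim: Ints_cases)
  obtain k2 where k2: "cartan \<beta> \<alpha> = of_int k2" using cartan_root_Ints[OF aR bR] by (auto elim: Ints_cases)
  have "cartan \<alpha> \<beta> > 0" "cartan \<beta> \<alpha> > 0"
    using \<open>\<not> \<alpha> \<bullet> \<beta> \<le> 0\<close> aR bR root_nonzero by (auto simp: cartan_def inner_commute)
  then have "k1 \<ge> 1" "k2 \<ge> 1" using k1 k2 by auto
  moreover have "k1 * k2 < 4" using cartan_mult_cartan_less_4[OF a b ne] k1 k2
    by (metis of_int_less_iff of_int_mult of_int_numeral)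
  ultimately have "k1 = 1 \<or> k2 = 1" using mult_mono[of 2 k1 2 k2] by linarith
  then have "\<alpha> - \<beta> \<in> R \<or> \<beta> - \<alpha> \<in> R"
    using refl_vec_root[OF bR aR] refl_vec_root[OF aR bR] k1 k2 by (auto simp: refl_vec_eq)
  then show False using simple_roots_diff_notin_roots a b ne by blast
qed

lemma cartan_simple_roots_nonpos: "\<alpha> \<in> \<Delta> \<Longrightarrow> \<beta> \<in> \<Delta> \<Longrightarrow> \<alpha> \<noteq> \<beta> \<Longrightarrow> cartan \<alpha> \<beta> \<le> 0"
  using inner_simple_roots_nonpos[of \<alpha> \<beta>] simple_root_nonzero[of \<beta>]
  by (simp add: cartan_def divide_nonpos_pos)

lemma cartan_simple_roots_le_minus_1:
  assumes "\<alpha> \<in> \<Delta>" "\<beta> \<in> \<Delta>" "\<alpha> \<noteq> \<beta>" "\<alpha> \<bullet> \<beta> \<noteq> 0"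
  shows "cartan \<alpha> \<beta> \<le> -1"
proof -
  obtain k where k: "cartan \<alpha> \<beta> = of_int k"
    using cartan_root_Ints assms(1,2) simple_roots_subset by (meson Ints_cases subsetD)
  moreover have "cartan \<alpha> \<beta> \<noteq> 0" using assms simple_roots_subset cartan_eq_0_iff by auto
  ultimately show ?thesis using cartan_simple_roots_nonpos[OF assms(1-3)] by simp
qed

lemma cartan_mult_cartan_ge_1:
  assumes "\<alpha> \<in> \<Delta>" "\<beta> \<in> \<Delta>" "\<alpha> \<noteq> \<beta>" "\<alpha> \<bullet> \<beta> \<noteq> 0"
  shows "cartan \<alpha> \<beta> * cartan \<beta> \<alpha> \<ge> 1"
  using cartan_simple_roots_le_minus_1[OF assms] cartan_simple_roots_le_minus_1[of \<beta> \<alpha>] assms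
    mult_ge1_I[of "- cartan \<alpha> \<beta>" "- cartan \<beta> \<alpha>"] by (simp add: inner_commute)

section \<open>The sequence \<open>\<nu>\<close>\<close>

lemma nu_seq_subset_pos: "nu_seq R \<Delta> u k \<subseteq> pos"
  by (cases k) auto

lemma nu_seq_Suc_subset: "nu_seq R \<Delta> u (Suc k) \<subseteq> nu_seq R \<Delta> u k"
proof (induction k)
  case 0
  then show ?case using Adj_subset_pos by auto
next
  case (Suc k)
  then show ?case using Adj_mono[OF Suc.IH] by auto
qed

lemma nu_seq_stable:
  assumes "nu_seq R \<Delta> u (Suc k) = nu_seq R \<Delta> u k" and "k \<le> l"
  shows "nu_seq R \<Delta> u l = nu_seq R \<Delta> u k"
  using assms(2)
proof (induction l rule: dec_induct)
  case (step l)
  then show ?case using assms(1) by (metis nu_seq.simps(2))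
qed simp

lemma nu_seq_stabilizes: "\<exists>k. nu_seq R \<Delta> u (Suc k) = nu_seq R \<Delta> u k"
proof (rule ccontr)
  assume "\<nexists>k. nu_seq R \<Delta> u (Suc k) = nu_seq R \<Delta> u k"
  then have "nu_seq R \<Delta> u (Suc k) \<subset> nu_seq R \<Delta> u k" for k
    using nu_seq_Suc_subset by blast
  then have "card (nu_seq R \<Delta> u (Suc k)) < card (nu_seq R \<Delta> u k)" for k
    using finite_pos_roots nu_seq_subset_pos by (meson psubset_card_mono rev_finite_subset)
  then have "card (nu_seq R \<Delta> u k) + k \<le> card (nu_seq R \<Delta> u 0)" for k
    by (induction k) (auto, meson Suc_le_eq add_less_le_mono le_refl order_less_le_trans)
  from this[of "Suc (card (nu_seq R \<Delta> u 0))"] show False by simp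
qed

lemma nu_eq_nu_seq:
  obtains k0 where "nu R \<Delta> u = nu_seq R \<Delta> u k0" "\<And>k. k0 \<le> k \<Longrightarrow> nu_seq R \<Delta> u k = nu_seq R \<Delta> u k0"
proof -
  obtain k0 where k0: "nu_seq R \<Delta> u (Suc k0) = nu_seq R \<Delta> u k0"
    using nu_seq_stabilizes by blast
  then have stable: "\<forall>k\<ge>k0. nu_seq R \<Delta> u k = nu_seq R \<Delta> u k0"
    using nu_seq_stable by blast
  have "nu R \<Delta> u = nu_seq R \<Delta> u k0"
    unfolding nu_def
  proof (rule the_equality)
    fix S assume "\<exists>k1. \<forall>k\<ge>k1. nu_seq R \<Delta> u k = S"
    then obtain k1 where "\<forall>k\<ge>k1. nu_seq R \<Delta> u k = S" by blast
    then show "S = nu_seq R \<Delta> u k0" using stable by (metis max.cobounded1 max.cobounded2)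
  qed (use stable in blast)
  then show thesis using that stable by blast
qed

lemma rational_if_nu_seq_empty:
  assumes "u \<in> weyl R" and "nu_seq R \<Delta> u k = {}"
  shows "rational R \<Delta> u"
proof -
  obtain k0 where k0: "nu R \<Delta> u = nu_seq R \<Delta> u k0"
    "\<And>k. k0 \<le> k \<Longrightarrow> nu_seq R \<Delta> u k = nu_seq R \<Delta> u k0"
    using nu_eq_nu_seq by blast
  have "nu_seq R \<Delta> u (max k k0) \<subseteq> nu_seq R \<Delta> u k"
    by (rule lift_Suc_antimono_le[of "nu_seq R \<Delta> u"]) (use nu_seq_Suc_subset in auto)
  then show ?thesis
    using assms k0 unfolding rational_def by (metis max.cobounded2 subset_empty)
qed

lemma not_rational_if_below_image:
  assumes "I \<subseteq> pos" "I \<noteq> {}" "I \<subseteq> Adj R \<Delta> (u ` I \<inter> pos)"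
  shows "\<not> rational R \<Delta> u"
proof -
  have sub: "u ` I \<inter> pos \<subseteq> nu_seq R \<Delta> u k" for k
  proof (induction k)
    case (Suc k)
    then show ?case using assms(3) Adj_mono[OF Suc.IH] by auto
  qed (use assms(1) in auto)
  have "u ` I \<inter> pos \<noteq> {}" using assms(2,3) unfolding Adj_def by blast
  moreover obtain k0 where "nu R \<Delta> u = nu_seq R \<Delta> u k0" using nu_eq_nu_seq by blast
  ultimately show ?thesis using sub[of k0] unfolding rational_def by blast
qed

lemma rational_if_filtration:
  assumes "u \<in> weyl R" and "pos \<subseteq> T 0" and "T (Suc N) = {}"
    and "\<And>m. u ` T m \<inter> pos \<subseteq> T (Suc m)"
    and "\<And>m. Adj R \<Delta> (T m) \<subseteq> T m"
  shows "rational R \<Delta> u"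
proof -
  have "nu_seq R \<Delta> u k \<subseteq> T (Suc k)" for k
  proof (induction k)
    case 0
    then show ?case using assms(2) assms(4)[of 0] by auto
  next
    case (Suc k)
    then show ?case using Adj_mono[OF Suc.IH] assms(4)[of "Suc k"] assms(5)[of "Suc k"] by fastforce
  qed
  then show ?thesis using rational_if_nu_seq_empty[OF assms(1)] assms(3) by blast
qed

abbreviation nonneg :: "'a \<Rightarrow> bool" where
  "nonneg v \<equiv> \<forall>\<alpha>\<in>\<Delta>. coef v \<alpha> \<ge> 0"

lemma coef_refl_prod_notin: "set ys \<subseteq> \<Delta> \<Longrightarrow> \<gamma> \<notin> set ys \<Longrightarrow> coef (refl_prod ys v) \<gamma> = coef v \<gamma>"
  by (induction ys) (auto simp: coef_refl_vec_other)

lemma coef_refl_prod_append_Cons: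
  "set ys \<subseteq> \<Delta> \<Longrightarrow> \<alpha> \<notin> set ys \<Longrightarrow>
    coef (refl_prod (ys @ \<alpha> # zs) v) \<alpha> = coef (refl_vec \<alpha> (refl_prod zs v)) \<alpha>"
  by (simp add: refl_prod_append coef_refl_prod_notin)

lemma coef_refl_vec_self_ge:
  assumes "\<alpha> \<in> \<Delta>" and "nonneg v" and "Z \<subseteq> \<Delta> - {\<alpha>}"
  shows "coef (refl_vec \<alpha> v) \<alpha> \<ge> - coef v \<alpha> + (\<Sum>\<gamma>\<in>Z. coef v \<gamma> * - cartan \<gamma> \<alpha>)"
proof -
  have "0 \<le> coef v \<gamma> * - cartan \<gamma> \<alpha>" if "\<gamma> \<in> \<Delta> - {\<alpha>}" for \<gamma>
    using assms(1,2) that cartan_simple_roots_nonpos[of \<gamma> \<alpha>] by (simp add: mult_nonneg_nonpos)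
  then have "(\<Sum>\<gamma>\<in>Z. coef v \<gamma> * - cartan \<gamma> \<alpha>) \<le> (\<Sum>\<gamma>\<in>\<Delta> - {\<alpha>}. coef v \<gamma> * - cartan \<gamma> \<alpha>)"
    using assms(3) finite_simple_roots by (intro sum_mono2) auto
  then show ?thesis using coef_refl_vec_self[OF assms(1), of v] by simp
qed

lemma coef_refl_vec_self_ge_neighbour:
  assumes "\<alpha> \<in> \<Delta>" "\<gamma> \<in> \<Delta>" "\<gamma> \<noteq> \<alpha>" "\<gamma> \<bullet> \<alpha> \<noteq> 0" and "nonneg v"
  shows "coef (refl_vec \<alpha> v) \<alpha> \<ge> coef v \<gamma> - coef v \<alpha>"
proof -
  have "coef v \<gamma> \<le> coef v \<gamma> * - cartan \<gamma> \<alpha>"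
    using cartan_simple_roots_le_minus_1[OF assms(2,1,3,4)] assms(2,5)
      mult_left_mono[of 1 "- cartan \<gamma> \<alpha>" "coef v \<gamma>"] by simp
  then show ?thesis using coef_refl_vec_self_ge[OF assms(1,5), of "{\<gamma>}"] assms(2,3) by simp
qed

lemma nonneg_refl_vec:
  assumes "\<alpha> \<in> \<Delta>" "nonneg v" "coef (refl_vec \<alpha> v) \<alpha> \<ge> 0"
  shows "nonneg (refl_vec \<alpha> v)"
proof
  fix \<gamma> assume "\<gamma> \<in> \<Delta>"
  then show "coef (refl_vec \<alpha> v) \<gamma> \<ge> 0"
    using assms by (cases "\<gamma> = \<alpha>") (auto simp: coef_refl_vec_other)
qed

lemma nonneg_refl_prod:
  "distinct ys \<Longrightarrow> set ys \<subseteq> \<Delta> \<Longrightarrow> nonneg v \<Longrightarrow> \<forall>y\<in>set ys. coef v y = 0 \<Longrightarrow> nonneg (refl_prod ys v)"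
proof (induction ys)
  case (Cons y ys)
  have y: "y \<in> \<Delta>" using Cons.prems(2) by simp
  have "nonneg (refl_prod ys v)" using Cons by simp
  moreover have "coef (refl_prod ys v) y = 0"
    using coef_refl_prod_notin[of ys y v] Cons.prems by simp
  ultimately have "coef (refl_vec y (refl_prod ys v)) y \<ge> 0"
    using coef_refl_vec_self_ge[OF y, of "refl_prod ys v" "{}"] by simp
  then show ?case using nonneg_refl_vec[OF y \<open>nonneg (refl_prod ys v)\<close>] by simp
qed simp

lemma not_rational_if_simple_below_image:
  assumes "u \<in> weyl R" and K: "K \<subseteq> \<Delta>" "K \<noteq> {}"
    and below: "\<And>\<alpha>. \<alpha> \<in> K \<Longrightarrow> \<exists>\<beta>\<in>K. coef (u \<beta>) \<alpha> \<ge> 1"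
  shows "\<not> rational R \<Delta> u"
proof (rule not_rational_if_below_image)
  show "K \<subseteq> pos" using K simple_roots_subset_pos by auto
  show "K \<subseteq> Adj R \<Delta> (u ` K \<inter> pos)"
  proof
    fix \<alpha> assume \<alpha>: "\<alpha> \<in> K"
    then obtain \<beta> where \<beta>: "\<beta> \<in> K" "coef (u \<beta>) \<alpha> \<ge> 1" using below by blast
    have "\<alpha> \<in> \<Delta>" using \<alpha> K by blast
    have "u \<beta> \<in> R" using weyl_image_roots[OF root_system assms(1)] \<beta>(1) K simple_roots_subset by auto
    then have "u \<beta> \<in> pos" using pos_rootI \<beta> \<alpha> K by fastforce
    moreover have "root_le \<Delta> \<alpha> (u \<beta>)"
      using \<open>u \<beta> \<in> R\<close> \<open>\<alpha> \<in> \<Delta>\<close> \<beta>(2) simple_roots_subset pos_root_coef_nonneg[OF \<open>u \<beta> \<in> pos\<close>]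
      by (intro root_leI) (auto simp: coef_simple_root)
    ultimately show "\<alpha> \<in> Adj R \<Delta> (u ` K \<inter> pos)"
      unfolding Adj_def using \<alpha> \<beta>(1) K simple_roots_subset_pos by blast
  qed
qed (use K in auto)

lemma coxeter_word_in_weyl: "set xs \<subseteq> \<Delta> \<Longrightarrow> refl_prod xs \<in> weyl R"
  using refl_prod_in_weyl simple_roots_subset by blast

lemma nonneg_refl_prod_simple:
  assumes "distinct ys" "set ys \<subseteq> \<Delta>" "\<alpha> \<in> \<Delta>" "\<alpha> \<notin> set ys"
  shows "nonneg (refl_prod ys \<alpha>)"
  by (rule nonneg_refl_prod[OF assms(1,2)]) (use assms(2-4) in \<open>auto simp: coef_simple_root\<close>)

lemma coef_refl_prod_simple_neighbour:
  assumes "distinct (p # ys)" "set (p # ys) \<subseteq> \<Delta>" "\<alpha> \<in> \<Delta>" "\<alpha> \<notin> set (p # ys)"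
  shows "coef (refl_prod (p # ys) \<alpha>) p \<ge> - cartan \<alpha> p"
proof -
  let ?v = "refl_prod ys \<alpha>"
  have "nonneg ?v" using nonneg_refl_prod_simple assms by simp
  moreover have "coef ?v \<alpha> = 1" "coef ?v p = 0"
    using assms coef_refl_prod_notin[of ys _ \<alpha>] by (auto simp: coef_simple_root)
  ultimately show ?thesis using coef_refl_vec_self_ge[of p ?v "{\<alpha>}"] assms by auto
qed

text \<open>The bond condition covers both a branch point and a multiple bond at \<open>p\<close>; the witness
  is \<open>p \<le> c(p)\<close>.\<close>
lemma not_rational_coxeter_source:
  assumes xs: "distinct (pre @ p # post)" "set (pre @ p # post) \<subseteq> \<Delta>"
    and Y: "Y \<subseteq> set post" "(\<Sum>y\<in>Y. cartan p y * cartan y p) \<ge> 2"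
  shows "\<not> rational R \<Delta> (refl_prod (pre @ p # post))"
proof (rule not_rational_if_simple_below_image[of _ "{p}"])
  have p: "p \<in> \<Delta>" and post: "set post \<subseteq> \<Delta>" "distinct post" "p \<notin> set post" "set pre \<subseteq> \<Delta>" "p \<notin> set pre"
    using xs by auto
  let ?w = "refl_prod post p"
  have w: "nonneg ?w" using nonneg_refl_prod_simple post p by simp
  have wp: "coef ?w p = 1" using coef_refl_prod_notin[OF post(1,3)] p by (simp add: coef_simple_root)
  have wy: "coef ?w y \<ge> - cartan p y" if y: "y \<in> set post" for y
  proof -
    obtain post1 post2 where sp: "post = post1 @ y # post2" using split_list[OF y] by blast
    then have "coef ?w y = coef (refl_prod (y # post2) p) y"
      using post by (simp add: coef_refl_prod_append_Cons)
    also have "\<dots> \<ge> - cartan p y"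
      using post p sp by (intro coef_refl_prod_simple_neighbour) auto
    finally show ?thesis .
  qed
  have "(\<Sum>y\<in>Y. cartan p y * cartan y p) \<le> (\<Sum>y\<in>Y. coef ?w y * - cartan y p)"
  proof (rule sum_mono)
    fix y assume "y \<in> Y"
    then have "- cartan y p \<ge> 0" "- cartan p y \<le> coef ?w y"
      using Y(1) post p wy cartan_simple_roots_nonpos[of y p] by auto
    then have "- cartan p y * - cartan y p \<le> coef ?w y * - cartan y p"
      by (rule mult_right_mono[rotated])
    then show "cartan p y * cartan y p \<le> coef ?w y * - cartan y p" by simp
  qed
  moreover have "coef (refl_vec p ?w) p \<ge> - 1 + (\<Sum>y\<in>Y. coef ?w y * - cartan y p)"
    using coef_refl_vec_self_ge[OF p w, of Y] wp Y(1) post by auto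
  ultimately have "coef (refl_vec p ?w) p \<ge> 1" using Y(2) by linarith
  then show "\<exists>\<beta>\<in>{p}. coef (refl_prod (pre @ p # post) \<beta>) \<alpha> \<ge> 1" if "\<alpha> \<in> {p}" for \<alpha>
    using that post by (simp add: coef_refl_prod_append_Cons)
qed (use xs coxeter_word_in_weyl in auto)

lemma coef_refl_prod_neighbour_ge_1:
  assumes "distinct (ys @ p # zs)" "set (ys @ p # zs) \<subseteq> \<Delta>" "\<alpha> \<in> \<Delta>" "\<alpha> \<notin> set (ys @ p # zs)"
    and "\<alpha> \<bullet> p \<noteq> 0"
  shows "coef (refl_prod (ys @ p # zs) \<alpha>) p \<ge> 1"
proof -
  have "\<alpha> \<noteq> p" "p \<in> \<Delta>" using assms(2,4) by auto
  then have "- cartan \<alpha> p \<ge> 1" using cartan_simple_roots_le_minus_1[of \<alpha> p] assms(3,5) by simp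
  moreover have "coef (refl_prod (ys @ p # zs) \<alpha>) p = coef (refl_prod (p # zs) \<alpha>) p"
    using assms(1,2) by (simp add: coef_refl_prod_append_Cons)
  moreover have "coef (refl_prod (p # zs) \<alpha>) p \<ge> - cartan \<alpha> p"
    using assms by (intro coef_refl_prod_simple_neighbour) auto
  ultimately show ?thesis by linarith
qed

lemma coxeter_sink_second_below_image_first:
  assumes xs: "distinct (A @ q\<^sub>1 # B @ q\<^sub>2 # C @ p # D)" "set (A @ q\<^sub>1 # B @ q\<^sub>2 # C @ p # D) \<subseteq> \<Delta>"
    and adj: "q\<^sub>1 \<bullet> p \<noteq> 0" "q\<^sub>2 \<bullet> p \<noteq> 0"
  shows "coef (refl_prod (A @ q\<^sub>1 # B @ q\<^sub>2 # C @ p # D) q\<^sub>1) q\<^sub>2 \<ge> 1"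
proof -
  let ?tail = "C @ p # D" and ?front = "A @ q\<^sub>1 # B"
  let ?w = "refl_prod ?tail q\<^sub>1"
  have q: "q\<^sub>1 \<in> \<Delta>" "q\<^sub>2 \<in> \<Delta>" "q\<^sub>1 \<notin> set ?tail" "q\<^sub>2 \<notin> set ?tail" "q\<^sub>1 \<noteq> q\<^sub>2" "p \<in> \<Delta>" "p \<noteq> q\<^sub>2"
    and tail: "distinct ?tail" "set ?tail \<subseteq> \<Delta>"
    and front: "set ?front \<subseteq> \<Delta>" "q\<^sub>2 \<notin> set ?front"
    using xs by auto
  have "coef ?w p \<ge> 1" "coef ?w q\<^sub>2 = 0"
    using coef_refl_prod_neighbour_ge_1 q tail adj coef_refl_prod_notin[OF tail(2) q(4)]
    by (auto simp: coef_simple_root)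
  moreover have "nonneg ?w" using nonneg_refl_prod_simple q tail by simp
  ultimately have "coef (refl_vec q\<^sub>2 ?w) q\<^sub>2 \<ge> 1"
    using coef_refl_vec_self_ge_neighbour[of q\<^sub>2 p ?w] q adj by (simp add: inner_commute)
  moreover have "refl_prod (A @ q\<^sub>1 # B @ q\<^sub>2 # C @ p # D) = refl_prod ?front \<circ> refl_vec q\<^sub>2 \<circ> refl_prod ?tail"
    by (simp add: refl_prod_append comp_assoc)
  ultimately show ?thesis using front by (simp add: coef_refl_prod_notin)
qed

lemma coxeter_sink_first_below_image_second:
  assumes xs: "distinct (A @ q\<^sub>1 # B @ q\<^sub>2 # C @ p # D)" "set (A @ q\<^sub>1 # B @ q\<^sub>2 # C @ p # D) \<subseteq> \<Delta>"
    and adj: "q\<^sub>1 \<bullet> p \<noteq> 0" "q\<^sub>2 \<bullet> p \<noteq> 0"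
  shows "coef (refl_prod (A @ q\<^sub>1 # B @ q\<^sub>2 # C @ p # D) q\<^sub>2) q\<^sub>1 \<ge> 1"
proof -
  let ?tail = "C @ p # D"
  let ?w = "refl_prod ?tail q\<^sub>2"
  let ?w' = "refl_vec q\<^sub>2 ?w"
  have q: "q\<^sub>1 \<in> \<Delta>" "q\<^sub>2 \<in> \<Delta>" "q\<^sub>1 \<notin> set ?tail" "q\<^sub>2 \<notin> set ?tail" "q\<^sub>1 \<noteq> q\<^sub>2"
      "p \<in> \<Delta>" "p \<noteq> q\<^sub>1" "p \<noteq> q\<^sub>2"
    and tail: "distinct ?tail" "set ?tail \<subseteq> \<Delta>"
    and front: "set A \<subseteq> \<Delta>" "q\<^sub>1 \<notin> set A"
    and mid: "set B \<subseteq> \<Delta>" "distinct B" "p \<notin> set B" "q\<^sub>1 \<notin> set B" "set B \<inter> set (q\<^sub>2 # ?tail) = {}"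
    using xs by auto
  have w: "nonneg ?w" "coef ?w p \<ge> 1" "coef ?w q\<^sub>2 = 1"
    using nonneg_refl_prod_simple coef_refl_prod_neighbour_ge_1 q tail adj
      coef_refl_prod_notin[OF tail(2) q(4)] by (auto simp: coef_simple_root)
  then have "coef ?w' q\<^sub>2 \<ge> 0"
    using coef_refl_vec_self_ge_neighbour[of q\<^sub>2 p ?w] q adj by (simp add: inner_commute)
  then have w': "nonneg ?w'" using nonneg_refl_vec q w by blast
  have "coef ?w' b = 0" if b: "b \<in> set B" for b
  proof -
    have "b \<noteq> q\<^sub>2" "b \<notin> set ?tail" using b mid(5) by auto
    then show ?thesis
      using q(2) tail(2) by (simp add: coef_refl_vec_other coef_refl_prod_notin coef_simple_root)
  qed
  then have "nonneg (refl_prod B ?w')" using nonneg_refl_prod mid(1,2) w' by blast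
  moreover have "coef (refl_prod B ?w') p \<ge> 1" "coef (refl_prod B ?w') q\<^sub>1 = 0"
    using w mid q coef_refl_prod_notin[OF mid(1)] coef_refl_prod_notin[OF tail(2) q(3)]
    by (auto simp: coef_refl_vec_other coef_simple_root)
  ultimately have "coef (refl_vec q\<^sub>1 (refl_prod B ?w')) q\<^sub>1 \<ge> 1"
    using coef_refl_vec_self_ge_neighbour[of q\<^sub>1 p "refl_prod B ?w'"] q adj by (simp add: inner_commute)
  moreover have "refl_prod (A @ q\<^sub>1 # B @ q\<^sub>2 # C @ p # D) =
      refl_prod A \<circ> refl_vec q\<^sub>1 \<circ> refl_prod B \<circ> refl_vec q\<^sub>2 \<circ> refl_prod ?tail"
    by (simp add: refl_prod_append comp_assoc)
  ultimately show ?thesis using front q(1) by (simp add: coef_refl_prod_notin)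
qed

lemma not_rational_coxeter_sink:
  assumes "distinct (A @ q\<^sub>1 # B @ q\<^sub>2 # C @ p # D)" "set (A @ q\<^sub>1 # B @ q\<^sub>2 # C @ p # D) \<subseteq> \<Delta>"
    and "q\<^sub>1 \<bullet> p \<noteq> 0" "q\<^sub>2 \<bullet> p \<noteq> 0"
  shows "\<not> rational R \<Delta> (refl_prod (A @ q\<^sub>1 # B @ q\<^sub>2 # C @ p # D))"
  using coxeter_sink_second_below_image_first[OF assms] coxeter_sink_first_below_image_second[OF assms]
  by (intro not_rational_if_simple_below_image[of _ "{q\<^sub>1, q\<^sub>2}"] coxeter_word_in_weyl) (use assms in auto)

section \<open>Connectedness of the Dynkin diagram\<close>

definition straddles :: "'a set \<Rightarrow> 'a \<Rightarrow> bool" where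
  "straddles A \<beta> \<longleftrightarrow> (\<exists>\<alpha>\<in>A. coef \<beta> \<alpha> \<noteq> 0) \<and> (\<exists>\<alpha>\<in>\<Delta> - A. coef \<beta> \<alpha> \<noteq> 0)"

definition height :: "'a \<Rightarrow> real" where
  "height \<beta> = (\<Sum>\<alpha>\<in>\<Delta>. coef \<beta> \<alpha>)"

lemma straddles_Diff: "A \<subseteq> \<Delta> \<Longrightarrow> straddles (\<Delta> - A) \<beta> \<longleftrightarrow> straddles A \<beta>"
  unfolding straddles_def by (auto simp: Diff_Diff_Int inf.absorb2)

lemma straddles_uminus: "straddles A (- \<beta>) \<longleftrightarrow> straddles A \<beta>"
  unfolding straddles_def by simp

lemma height_refl_vec:
  assumes "\<alpha> \<in> \<Delta>"
  shows "height (refl_vec \<alpha> \<beta>) = height \<beta> - cartan \<beta> \<alpha>"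
proof -
  have "height (refl_vec \<alpha> \<beta>) = (\<Sum>\<gamma>\<in>\<Delta>. coef \<beta> \<gamma> - (if \<gamma> = \<alpha> then cartan \<beta> \<alpha> else 0))"
    unfolding height_def by (simp add: coef_refl_vec[OF assms])
  also have "\<dots> = height \<beta> - cartan \<beta> \<alpha>"
    using assms finite_simple_roots by (simp add: sum_subtractf height_def)
  finally show ?thesis .
qed

lemma height_pos_root_nonneg: "\<beta> \<in> pos \<Longrightarrow> height \<beta> \<ge> 0"
  unfolding height_def by (rule sum_nonneg) (simp add: pos_root_coef_nonneg)

lemma exists_simple_root_inner_pos:
  assumes "\<beta> \<in> pos"
  shows "\<exists>\<alpha>\<in>\<Delta>. \<beta> \<bullet> \<alpha> > 0"
proof (rule ccontr)
  assume "\<not> ?thesis"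
  then have "\<alpha> \<bullet> \<beta> \<le> 0" if "\<alpha> \<in> \<Delta>" for \<alpha>
    using that by (auto simp: inner_commute)
  then have "coef \<beta> \<alpha> * (\<alpha> \<bullet> \<beta>) \<le> 0" if "\<alpha> \<in> \<Delta>" for \<alpha>
    using that pos_root_coef_nonneg[OF assms] by (simp add: mult_nonneg_nonpos)
  then have "\<beta> \<bullet> \<beta> \<le> 0" unfolding inner_expansion[of \<beta>] by (simp add: sum_nonpos)
  moreover have "\<beta> \<noteq> 0" using assms pos_roots_subset root_nonzero by auto
  ultimately show False using inner_gt_zero_iff[of \<beta>] by linarith
qed

lemma inner_eq_0_if_orthogonal_supports:
  assumes "\<And>\<alpha> \<gamma>. \<alpha> \<in> \<Delta> \<Longrightarrow> \<gamma> \<in> \<Delta> \<Longrightarrow> coef v \<alpha> \<noteq> 0 \<Longrightarrow> coef w \<gamma> \<noteq> 0 \<Longrightarrow> \<alpha> \<bullet> \<gamma> = 0"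
  shows "v \<bullet> w = 0"
proof -
  have "v \<bullet> w = (\<Sum>\<alpha>\<in>\<Delta>. coef v \<alpha> *\<^sub>R \<alpha>) \<bullet> (\<Sum>\<gamma>\<in>\<Delta>. coef w \<gamma> *\<^sub>R \<gamma>)"
    by (simp only: coef_expansion)
  also have "\<dots> = (\<Sum>\<gamma>\<in>\<Delta>. \<Sum>\<alpha>\<in>\<Delta>. coef w \<gamma> * (coef v \<alpha> * (\<alpha> \<bullet> \<gamma>)))"
    by (simp add: inner_sum_left inner_sum_right sum_distrib_left mult.assoc)
  also have "\<dots> = 0" using assms by (intro sum.neutral ballI) auto
  finally show ?thesis .
qed

text \<open>If the \<open>A\<close>-part of \<open>s\<^sub>\<alpha> \<beta>\<close> vanished, \<open>s\<^sub>\<alpha> \<beta>\<close> would be orthogonal to \<open>\<alpha>\<close>, whereas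
  \<open>s\<^sub>\<alpha> \<beta> \<bullet> \<alpha> = - (\<beta> \<bullet> \<alpha>) \<noteq> 0\<close>.\<close>
lemma straddles_refl_vec:
  assumes A: "A \<subseteq> \<Delta>" and orth: "\<And>x y. x \<in> A \<Longrightarrow> y \<in> \<Delta> - A \<Longrightarrow> x \<bullet> y = 0"
    and \<beta>: "\<beta> \<in> pos" "straddles A \<beta>" and \<alpha>: "\<alpha> \<in> A" "\<beta> \<bullet> \<alpha> > 0"
  shows "refl_vec \<alpha> \<beta> \<in> pos \<and> straddles A (refl_vec \<alpha> \<beta>) \<and> height (refl_vec \<alpha> \<beta>) \<le> height \<beta> - 1"
proof -
  have "\<alpha> \<in> \<Delta>" "\<alpha> \<in> R" "\<beta> \<in> R" using \<alpha> A \<beta> simple_roots_subset pos_roots_subset by auto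
  let ?\<beta>' = "refl_vec \<alpha> \<beta>"
  obtain \<gamma> where \<gamma>: "\<gamma> \<in> \<Delta> - A" "coef \<beta> \<gamma> \<noteq> 0" using \<beta>(2) unfolding straddles_def by blast
  have "\<gamma> \<noteq> \<alpha>" using \<gamma> \<alpha> by auto
  then have "coef ?\<beta>' \<gamma> = coef \<beta> \<gamma>" using \<open>\<alpha> \<in> \<Delta>\<close> coef_refl_vec_other by auto
  moreover have "coef \<beta> \<gamma> > 0" using \<gamma> pos_root_coef_nonneg[OF \<beta>(1)] by force
  ultimately have "?\<beta>' \<in> pos" using pos_rootI refl_vec_root \<open>\<alpha> \<in> R\<close> \<open>\<beta> \<in> R\<close> \<gamma> by auto
  have "\<exists>x\<in>A. coef ?\<beta>' x \<noteq> 0"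
  proof (rule ccontr)
    assume none: "\<not> (\<exists>x\<in>A. coef ?\<beta>' x \<noteq> 0)"
    have "?\<beta>' \<bullet> \<alpha> = 0"
    proof (rule inner_eq_0_if_orthogonal_supports)
      fix x y assume "x \<in> \<Delta>" "y \<in> \<Delta>" "coef ?\<beta>' x \<noteq> 0" "coef \<alpha> y \<noteq> 0"
      then have "x \<in> \<Delta> - A" "y = \<alpha>"
        using none \<open>\<alpha> \<in> \<Delta>\<close> by (auto simp: coef_simple_root split: if_splits)
      then show "x \<bullet> y = 0" using orth[of \<alpha> x] \<alpha>(1) by (simp add: inner_commute)
    qed
    then show False using \<alpha>(2) inner_refl_vec_self[of \<alpha> \<beta>] \<open>\<alpha> \<in> R\<close> root_nonzero by simp
  qed
  moreover have "coef ?\<beta>' \<gamma> \<noteq> 0" using \<gamma>(2) \<open>coef ?\<beta>' \<gamma> = coef \<beta> \<gamma>\<close> by simp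
  ultimately have "straddles A ?\<beta>'" using \<gamma>(1) unfolding straddles_def by blast
  moreover have "cartan \<beta> \<alpha> \<ge> 1"
  proof -
    obtain k where "cartan \<beta> \<alpha> = of_int k" using cartan_root_Ints \<open>\<alpha> \<in> R\<close> \<open>\<beta> \<in> R\<close> by (meson Ints_cases)
    moreover have "cartan \<beta> \<alpha> > 0" using \<alpha>(2) \<open>\<alpha> \<in> R\<close> root_nonzero by (simp add: cartan_def)
    ultimately show ?thesis by simp
  qed
  ultimately show ?thesis using \<open>?\<beta>' \<in> pos\<close> height_refl_vec[OF \<open>\<alpha> \<in> \<Delta>\<close>, of \<beta>] by simp
qed

lemma not_straddles_pos_root:
  assumes A: "A \<subseteq> \<Delta>" and orth: "\<And>x y. x \<in> A \<Longrightarrow> y \<in> \<Delta> - A \<Longrightarrow> x \<bullet> y = 0"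
  shows "\<beta> \<in> pos \<Longrightarrow> \<not> straddles A \<beta>"
proof -
  have orth': "x \<bullet> y = 0" if "x \<in> \<Delta> - A" "y \<in> \<Delta> - (\<Delta> - A)" for x y
    using orth[of y x] that by (simp add: inner_commute)
  have "\<forall>\<beta>\<in>pos. height \<beta> < real n \<longrightarrow> \<not> straddles A \<beta>" for n
  proof (induction n)
    case 0
    then show ?case using height_pos_root_nonneg by force
  next
    case (Suc n)
    show ?case
    proof (intro ballI impI notI)
      fix \<beta> assume \<beta>: "\<beta> \<in> pos" "height \<beta> < real (Suc n)" "straddles A \<beta>"
      obtain \<alpha> where \<alpha>: "\<alpha> \<in> \<Delta>" "\<beta> \<bullet> \<alpha> > 0" using exists_simple_root_inner_pos[OF \<beta>(1)] by blast
      show False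
      proof (cases "\<alpha> \<in> A")
        case True
        then show False using straddles_refl_vec[OF A orth \<beta>(1,3) True \<alpha>(2)] Suc.IH \<beta>(2) by auto
      next
        case False
        then have "\<alpha> \<in> \<Delta> - A" "straddles (\<Delta> - A) \<beta>" using \<alpha>(1) \<beta>(3) straddles_Diff[OF A] by auto
        then show False
          using straddles_refl_vec[OF Diff_subset orth' \<beta>(1)] \<alpha>(2) Suc.IH \<beta>(2) straddles_Diff[OF A] by fastforce
      qed
    qed
  qed
  then show "\<beta> \<in> pos \<Longrightarrow> \<not> straddles A \<beta>" using reals_Archimedean2 by blast
qed

lemma connected_graph_dynkin:
  assumes "indecomposable R"
  shows "connected_graph \<Delta> (\<lambda>\<alpha> \<beta>. \<alpha> \<bullet> \<beta> \<noteq> 0)"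
  unfolding connected_graph_def
proof (intro allI impI, rule ccontr)
  fix A assume A: "A \<subseteq> \<Delta>" "A \<noteq> {}" "A \<noteq> \<Delta>" and "\<not> (\<exists>x\<in>A. \<exists>y\<in>\<Delta> - A. x \<bullet> y \<noteq> 0)"
  then have orth: "\<And>x y. x \<in> A \<Longrightarrow> y \<in> \<Delta> - A \<Longrightarrow> x \<bullet> y = 0" by blast
  have "\<not> straddles A \<beta>" if "\<beta> \<in> R" for \<beta>
    using not_straddles_pos_root[OF A(1) orth] uminus_pos_root[OF that] straddles_uminus by metis
  define R\<^sub>1 where "R\<^sub>1 = {\<beta>\<in>R. \<forall>\<gamma>\<in>\<Delta> - A. coef \<beta> \<gamma> = 0}"
  define R\<^sub>2 where "R\<^sub>2 = {\<beta>\<in>R. \<forall>\<gamma>\<in>A. coef \<beta> \<gamma> = 0}"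
  have "R\<^sub>1 \<union> R\<^sub>2 = R" using \<open>\<And>\<beta>. \<beta> \<in> R \<Longrightarrow> \<not> straddles A \<beta>\<close>
    unfolding R\<^sub>1_def R\<^sub>2_def straddles_def by auto
  moreover have "A \<subseteq> R\<^sub>1" "\<Delta> - A \<subseteq> R\<^sub>2"
    using A simple_roots_subset by (auto simp: R\<^sub>1_def R\<^sub>2_def coef_simple_root)
  moreover have "x \<bullet> y = 0" if "x \<in> R\<^sub>1" "y \<in> R\<^sub>2" for x y
  proof (rule inner_eq_0_if_orthogonal_supports)
    fix \<alpha> \<gamma> assume "\<alpha> \<in> \<Delta>" "\<gamma> \<in> \<Delta>" "coef x \<alpha> \<noteq> 0" "coef y \<gamma> \<noteq> 0"
    then have "\<alpha> \<in> A" "\<gamma> \<in> \<Delta> - A" using that unfolding R\<^sub>1_def R\<^sub>2_def by auto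
    then show "\<alpha> \<bullet> \<gamma> = 0" by (rule orth)
  qed
  moreover have "R\<^sub>1 \<noteq> {}" "R\<^sub>2 \<noteq> {}" using A \<open>A \<subseteq> R\<^sub>1\<close> \<open>\<Delta> - A \<subseteq> R\<^sub>2\<close> by auto
  ultimately have "\<exists>B C. B \<noteq> {} \<and> C \<noteq> {} \<and> B \<union> C = R \<and> (\<forall>b\<in>B. \<forall>c\<in>C. b \<bullet> c = 0)"
    by (intro exI[of _ R\<^sub>1] exI[of _ R\<^sub>2]) simp
  then show False using assms unfolding indecomposable_def by blast
qed

section \<open>Rational Coxeter elements are of type A\<close>

lemma cartan_mult_cartan_Ints: "\<alpha> \<in> \<Delta> \<Longrightarrow> \<beta> \<in> \<Delta> \<Longrightarrow> cartan \<alpha> \<beta> * cartan \<beta> \<alpha> \<in> \<int>"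
  using cartan_root_Ints simple_roots_subset by (simp add: Ints_mult subset_iff)

lemma rational_coxeter_word_bonds_after:
  assumes xs: "distinct xs" "set xs \<subseteq> \<Delta>" "rational R \<Delta> (refl_prod xs)"
    and "i < length xs" "Y \<subseteq> set (drop (Suc i) xs)"
  shows "(\<Sum>y\<in>Y. cartan (xs ! i) y * cartan y (xs ! i)) < 2"
  using not_rational_coxeter_source[of "take i xs" "xs ! i" "drop (Suc i) xs" Y]
    id_take_nth_drop[OF assms(4)] assms by (metis not_le)

lemma rational_coxeter_word_neighbour_after_unique:
  assumes xs: "distinct xs" "set xs \<subseteq> \<Delta>" "rational R \<Delta> (refl_prod xs)"
    and ij: "i < j" "j < length xs" "xs ! i \<bullet> xs ! j \<noteq> 0"
    and ik: "i < k" "k < length xs" "xs ! i \<bullet> xs ! k \<noteq> 0"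
  shows "j = k"
proof (rule ccontr)
  assume "j \<noteq> k"
  have simple: "xs ! i \<in> \<Delta>" "xs ! j \<in> \<Delta>" "xs ! k \<in> \<Delta>" using xs(2) ij ik by auto
  have ne: "xs ! i \<noteq> xs ! j" "xs ! i \<noteq> xs ! k" "xs ! j \<noteq> xs ! k"
    using xs(1) ij ik \<open>j \<noteq> k\<close> by (auto simp: nth_eq_iff_index_eq)
  have "2 \<le> (\<Sum>y\<in>{xs ! j, xs ! k}. cartan (xs ! i) y * cartan y (xs ! i))"
    using cartan_mult_cartan_ge_1[of "xs ! i" "xs ! j"] cartan_mult_cartan_ge_1[of "xs ! i" "xs ! k"]
      simple ne ij(3) ik(3) by simp
  moreover have "(\<Sum>y\<in>{xs ! j, xs ! k}. cartan (xs ! i) y * cartan y (xs ! i)) < 2"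
    by (rule rational_coxeter_word_bonds_after[OF xs]) (use nth_in_set_drop ij ik in auto)
  ultimately show False by linarith
qed

lemma rational_coxeter_word_simply_laced:
  assumes xs: "distinct xs" "set xs \<subseteq> \<Delta>" "rational R \<Delta> (refl_prod xs)"
    and "i < j" "j < length xs"
  shows "cartan (xs ! i) (xs ! j) * cartan (xs ! j) (xs ! i) < 2"
  using rational_coxeter_word_bonds_after[OF xs, of i "{xs ! j}"] nth_in_set_drop[OF assms(4,5)] assms(4,5)
  by simp

lemma rational_coxeter_word_neighbour_before_unique:
  assumes xs: "distinct xs" "set xs \<subseteq> \<Delta>" "rational R \<Delta> (refl_prod xs)"
    and "j < i" "k < i" "i < length xs" "xs ! j \<bullet> xs ! i \<noteq> 0" "xs ! k \<bullet> xs ! i \<noteq> 0"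
  shows "j = k"
proof (rule ccontr)
  assume "j \<noteq> k"
  then consider "j < k" | "k < j" by linarith
  then show False
  proof cases
    case 1
    then obtain A B C D where "xs = A @ xs ! j # B @ xs ! k # C @ xs ! i # D"
      using split_list_nth3 assms(4-6) by blast
    then show False using not_rational_coxeter_sink xs assms(7,8) by metis
  next
    case 2
    then obtain A B C D where "xs = A @ xs ! k # B @ xs ! j # C @ xs ! i # D"
      using split_list_nth3 assms(4-6) by blast
    then show False using not_rational_coxeter_sink xs assms(7,8) by metis
  qed
qed

lemma rational_coxeter_word_bonds:
  assumes "indecomposable R" and xs: "distinct xs" "set xs = \<Delta>" "rational R \<Delta> (refl_prod xs)"
    and ij: "i < length xs" "j < length xs" "i \<noteq> j"
  shows "cartan (xs ! i) (xs ! j) * cartan (xs ! j) (xs ! i) = (if i = j + 1 \<or> j = i + 1 then 1 else 0)"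
proof -
  let ?n = "length xs"
  have xs': "distinct xs" "set xs \<subseteq> \<Delta>" "rational R \<Delta> (refl_prod xs)" using xs by auto
  have "inj_on ((!) xs) {..<?n}" using xs(1) by (simp add: inj_on_nth)
  moreover have "(!) xs ` {..<?n} = \<Delta>" using xs(2) by (auto simp: in_set_conv_nth image_iff)
  ultimately have "connected_graph {..<?n} (\<lambda>i j. xs ! i \<bullet> xs ! j \<noteq> 0)"
    using connected_graph_reindex connected_graph_dynkin[OF assms(1)] by fastforce
  then have path: "xs ! i \<bullet> xs ! j \<noteq> 0 \<longleftrightarrow> i = j + 1 \<or> j = i + 1"
  proof (rule connected_graph_path)
    show "(xs ! i \<bullet> xs ! j \<noteq> 0) = (xs ! j \<bullet> xs ! i \<noteq> 0)" for i j by (simp add: inner_commute)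
    show "j = k" if "i < j" "i < k" "k < ?n" "j < ?n" "xs ! i \<bullet> xs ! j \<noteq> 0" "xs ! i \<bullet> xs ! k \<noteq> 0"
      for i j k using rational_coxeter_word_neighbour_after_unique[OF xs' that(1,4,5,2,3,6)] .
    show "j = k" if "j < i" "k < i" "i < ?n" "xs ! j \<bullet> xs ! i \<noteq> 0" "xs ! k \<bullet> xs ! i \<noteq> 0"
      for i j k using rational_coxeter_word_neighbour_before_unique[OF xs' that] .
  qed (use ij in auto)
  have simple: "xs ! i \<in> \<Delta>" "xs ! j \<in> \<Delta>" "xs ! i \<noteq> xs ! j"
    using xs ij by (auto simp: nth_eq_iff_index_eq)
  show ?thesis
  proof (cases "i = j + 1 \<or> j = i + 1")
    case True
    then have "cartan (xs ! i) (xs ! j) * cartan (xs ! j) (xs ! i) < 2"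
      using rational_coxeter_word_simply_laced[OF xs'] ij by (metis less_add_one mult.commute)
    moreover have "cartan (xs ! i) (xs ! j) * cartan (xs ! j) (xs ! i) \<ge> 1"
      using cartan_mult_cartan_ge_1 simple path True by blast
    moreover obtain k where "cartan (xs ! i) (xs ! j) * cartan (xs ! j) (xs ! i) = of_int k"
      using cartan_mult_cartan_Ints simple by (meson Ints_cases)
    ultimately show ?thesis using True by simp
  next
    case False
    then show ?thesis using path by (simp add: cartan_def)
  qed
qed

end

section \<open>The Coxeter element \<open>C\<close> of type A\<close>

locale typeA_base = based_root_system +
  fixes f :: "nat \<Rightarrow> 'a"
  assumes typeA: "typeA_numbering \<Delta> f"
begin

abbreviation r :: nat where
  "r \<equiv> card \<Delta>"

abbreviation C :: "'a \<Rightarrow> 'a" where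
  "C \<equiv> coxC \<Delta> f"

abbreviation cf :: "'a \<Rightarrow> nat \<Rightarrow> real" where
  "cf v k \<equiv> coef v (f k)"

lemma f_bij: "bij_betw f {1..r} \<Delta>"
  using typeA by (simp add: typeA_numbering_def)

lemma f_in_simple_roots: "i \<in> {1..r} \<Longrightarrow> f i \<in> \<Delta>"
  using f_bij bij_betwE by blast

lemma f_eq_iff: "i \<in> {1..r} \<Longrightarrow> j \<in> {1..r} \<Longrightarrow> f i = f j \<longleftrightarrow> i = j"
  using f_bij unfolding bij_betw_def inj_on_def by blast

lemma simple_root_eq_f: "\<alpha> \<in> \<Delta> \<Longrightarrow> \<exists>i\<in>{1..r}. \<alpha> = f i"
  using f_bij by (auto simp: bij_betw_def)

lemma r_pos: "r \<ge> 1"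
proof -
  obtain b :: 'a where "b \<in> Basis" using nonempty_Basis by blast
  then have "\<Delta> \<noteq> {}" using span_simple_roots[of b] nonzero_Basis by fastforce
  then show ?thesis using finite_simple_roots by (simp add: Suc_le_eq card_gt_0_iff)
qed

lemma cartan_f:
  assumes i: "i \<in> {1..r}" and j: "j \<in> {1..r}" and "i \<noteq> j"
  shows "cartan (f i) (f j) = (if i = j + 1 \<or> j = i + 1 then -1 else 0)"
proof -
  have simple: "f i \<in> \<Delta>" "f j \<in> \<Delta>" "f i \<noteq> f j"
    using f_in_simple_roots f_eq_iff i j \<open>i \<noteq> j\<close> by auto
  have bond: "cartan (f i) (f j) * cartan (f j) (f i) = (if i = j + 1 \<or> j = i + 1 then 1 else 0)"
    using typeA i j \<open>i \<noteq> j\<close> by (simp add: typeA_numbering_def)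
  show ?thesis
  proof (cases "f i \<bullet> f j = 0")
    case True
    then show ?thesis using bond by (simp add: cartan_def split: if_splits)
  next
    case False
    then have "cartan (f i) (f j) \<le> -1" "cartan (f j) (f i) \<le> -1"
      using cartan_simple_roots_le_minus_1 simple by (auto simp: inner_commute)
    moreover from this have "cartan (f i) (f j) * cartan (f j) (f i) \<ge> - cartan (f i) (f j)"
      using mult_left_mono_neg[of "cartan (f j) (f i)" "-1" "cartan (f i) (f j)"] by simp
    ultimately show ?thesis using bond by (auto split: if_splits)
  qed
qed

lemma cf_f: "i \<in> {1..r} \<Longrightarrow> k \<in> {1..r} \<Longrightarrow> cf (f i) k = (if k = i then 1 else 0)"
  using coef_simple_root f_in_simple_roots f_eq_iff by auto

lemma cf_refl_vec_other: "m \<in> {1..r} \<Longrightarrow> k \<in> {1..r} \<Longrightarrow> k \<noteq> m \<Longrightarrow> cf (refl_vec (f m) v) k = cf v k"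
  using coef_refl_vec_other f_in_simple_roots f_eq_iff by auto

lemma cf_refl_vec_self:
  assumes m: "m \<in> {1..r}"
  shows "cf (refl_vec (f m) v) m =
    - cf v m + (if 2 \<le> m then cf v (m - 1) else 0) + (if m + 1 \<le> r then cf v (m + 1) else 0)"
proof -
  have "bij_betw f ({1..r} - {m}) (\<Delta> - {f m})"
    using bij_betw_DiffI[OF f_bij, of "{m}" "{f m}"] m f_in_simple_roots by blast
  then have "(\<Sum>\<gamma>\<in>\<Delta> - {f m}. coef v \<gamma> * - cartan \<gamma> (f m)) =
      (\<Sum>j\<in>{1..r} - {m}. cf v j * - cartan (f j) (f m))"
    by (rule sum.reindex_bij_betw[symmetric])
  also have "\<dots> = (\<Sum>j\<in>{1..r} - {m}. (if j = m - 1 then cf v j else 0)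
      + (if j = m + 1 then cf v j else 0))"
    using m by (intro sum.cong) (auto simp: cartan_f)
  also have "\<dots> = (if m - 1 \<in> {1..r} - {m} then cf v (m - 1) else 0)
      + (if m + 1 \<in> {1..r} - {m} then cf v (m + 1) else 0)"
    by (simp only: sum.distrib sum.delta finite_Diff finite_atLeastAtMost)
  also have "\<dots> = (if 2 \<le> m then cf v (m - 1) else 0) + (if m + 1 \<le> r then cf v (m + 1) else 0)"
    using m by auto
  finally show ?thesis using coef_refl_vec_self[OF f_in_simple_roots[OF m], of v] by simp
qed

lemma cf_refl_prod_suffix:
  assumes "1 \<le> m" "m \<le> r + 1"
  shows "\<forall>k\<in>{1..r}. cf (refl_prod (map f [m..<r + 1]) \<gamma>) k =
    (if k < m then cf \<gamma> k else (if k = 1 then 0 else cf \<gamma> (k - 1)) - cf \<gamma> r)"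
  using assms(2)
proof (induction m rule: inc_induct)
  case (step m)
  let ?w = "refl_prod (map f [Suc m..<r + 1]) \<gamma>"
  have m: "m \<in> {1..r}" using step assms(1) by auto
  have "[m..<r + 1] = m # [Suc m..<r + 1]" using m by (simp add: upt_conv_Cons)
  then have w: "refl_prod (map f [m..<r + 1]) \<gamma> = refl_vec (f m) ?w" by simp
  show ?case
  proof
    fix k assume k: "k \<in> {1..r}"
    show "cf (refl_prod (map f [m..<r + 1]) \<gamma>) k =
      (if k < m then cf \<gamma> k else (if k = 1 then 0 else cf \<gamma> (k - 1)) - cf \<gamma> r)"
    proof (cases "k = m")
      case True
      have "cf ?w m = cf \<gamma> m" using step.IH[rule_format, of m] m by (simp del: upt_Suc)
      moreover have "cf ?w (m - 1) = cf \<gamma> (m - 1)" if "2 \<le> m"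
      proof -
        have "m - 1 \<in> {1..r}" "m - 1 < Suc m" using m that by auto
        then show ?thesis using step.IH by (simp del: upt_Suc)
      qed
      moreover have "cf ?w (m + 1) = cf \<gamma> m - cf \<gamma> r" if "m + 1 \<le> r"
        using step.IH[rule_format, of "m + 1"] m that by (simp del: upt_Suc)
      moreover have "m = r" if "\<not> m + 1 \<le> r" using m that by simp
      ultimately show ?thesis
        unfolding w using cf_refl_vec_self[OF m, of ?w] True m by (cases "m + 1 \<le> r") auto
    next
      case False
      then show ?thesis unfolding w using cf_refl_vec_other[OF m k False] step.IH k by (auto simp del: upt_Suc)
    qed
  qed
qed simp

lemma cf_coxC: "k \<in> {1..r} \<Longrightarrow> cf (C \<gamma>) k = (if k = 1 then 0 else cf \<gamma> (k - 1)) - cf \<gamma> r"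
  using cf_refl_prod_suffix[of 1 \<gamma>] by (simp add: coxC_def)

definition T :: "nat \<Rightarrow> 'a set" where
  "T m = {\<beta>\<in>pos. \<forall>i\<in>{1..r}. i \<le> m \<longrightarrow> cf \<beta> i = 0}"

lemma pos_subset_T0: "pos \<subseteq> T 0"
  by (auto simp: T_def)

lemma T_Suc_r: "T (Suc r) = {}"
proof -
  have "\<beta> = 0" if "\<beta> \<in> T (Suc r)" for \<beta>
    using that simple_root_eq_f by (intro eq_0_if_coef_eq_0) (fastforce simp: T_def)
  then show ?thesis using pos_roots_subset root_nonzero by (force simp: T_def)
qed

lemma Adj_T: "Adj R \<Delta> (T m) \<subseteq> T m"
proof
  fix \<alpha> assume "\<alpha> \<in> Adj R \<Delta> (T m)"
  then obtain \<beta> where "\<alpha> \<in> pos" "\<beta> \<in> T m" "root_le \<Delta> \<alpha> \<beta>" unfolding Adj_def by blast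
  then show "\<alpha> \<in> T m"
    using root_le_coef pos_root_coef_nonneg f_in_simple_roots unfolding T_def by (force intro: antisym)
qed

lemma rational_if_lower_triangular:
  assumes "u \<in> weyl R"
    and first: "\<And>\<gamma>. cf (u \<gamma>) 1 = - cf \<gamma> r"
    and later: "\<And>\<gamma> k. k \<in> {2..r} \<Longrightarrow> cf \<gamma> r = 0 \<Longrightarrow> (\<forall>j\<in>{1..<k}. cf \<gamma> j = 0) \<Longrightarrow> cf (u \<gamma>) k = 0"
  shows "rational R \<Delta> u"
proof (rule rational_if_filtration[OF assms(1) pos_subset_T0 T_Suc_r _ Adj_T])
  fix m
  show "u ` T m \<inter> pos \<subseteq> T (Suc m)"
  proof
    fix x assume "x \<in> u ` T m \<inter> pos"
    then obtain \<gamma> where \<gamma>: "\<gamma> \<in> T m" "x = u \<gamma>" "x \<in> pos" by blast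
    have one: "1 \<in> {1..r}" and r: "r \<in> {1..r}" using r_pos by auto
    have "cf x 1 \<ge> 0" "cf \<gamma> r \<ge> 0"
      using \<gamma> pos_root_coef_nonneg f_in_simple_roots[OF one] f_in_simple_roots[OF r]
      unfolding T_def by auto
    then have "cf \<gamma> r = 0" using first[of \<gamma>] \<gamma>(2) by simp
    moreover have "cf x k = 0" if "k \<in> {1..r}" "k \<le> Suc m" for k
    proof (cases "k = 1")
      case False
      then have "\<forall>j\<in>{1..<k}. cf \<gamma> j = 0" using \<gamma>(1) that unfolding T_def by auto
      then show ?thesis using later[of k \<gamma>] \<open>cf \<gamma> r = 0\<close> \<gamma>(2) that False by simp
    qed (use first \<gamma>(2) \<open>cf \<gamma> r = 0\<close> in simp)
    ultimately show "x \<in> T (Suc m)" using \<gamma>(3) unfolding T_def by blast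
  qed
qed

lemma coxC_in_weyl: "C \<in> weyl R"
  unfolding coxC_def by (rule coxeter_word_in_weyl) (use f_in_simple_roots in auto)

lemma rational_coxC: "rational R \<Delta> C"
  by (rule rational_if_lower_triangular[OF coxC_in_weyl]) (use r_pos in \<open>auto simp: cf_coxC\<close>)

lemma rational_refl_vec_coxC: "r \<ge> 2 \<Longrightarrow> rational R \<Delta> (refl_vec (f r) \<circ> C)"
proof (rule rational_if_lower_triangular)
  assume r: "r \<ge> 2"
  then have rr: "r \<in> {1..r}" "r - 1 \<in> {1..r}" by auto
  show "refl_vec (f r) \<circ> C \<in> weyl R"
    using coxC_in_weyl f_in_simple_roots[OF rr(1)] simple_roots_subset by (auto intro: weyl_step)
  show "cf ((refl_vec (f r) \<circ> C) \<gamma>) 1 = - cf \<gamma> r" for \<gamma>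
    using cf_refl_vec_other[OF rr(1), of 1] cf_coxC[of 1] r by simp
  show "cf ((refl_vec (f r) \<circ> C) \<gamma>) k = 0"
    if "k \<in> {2..r}" "cf \<gamma> r = 0" "\<forall>j\<in>{1..<k}. cf \<gamma> j = 0" for \<gamma> k
  proof (cases "k = r")
    case True
    then show ?thesis
      using that cf_refl_vec_self[OF rr(1), of "C \<gamma>"] cf_coxC[OF rr(1)] cf_coxC[OF rr(2)] r by auto
  next
    case False
    then show ?thesis using that cf_refl_vec_other[OF rr(1), of k] cf_coxC[of k] by auto
  qed
qed

lemma not_rational_refl_vec_coxC:
  assumes i: "i \<in> {1..r}" "i < r"
  shows "\<not> rational R \<Delta> (refl_vec (f i) \<circ> C)"
proof (rule not_rational_if_simple_below_image[of _ "{f i}"])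
  show "refl_vec (f i) \<circ> C \<in> weyl R"
    using coxC_in_weyl f_in_simple_roots[OF i(1)] simple_roots_subset by (auto intro: weyl_step)
  have Cf: "cf (C (f i)) k = (if k = i + 1 then 1 else 0)" if k: "k \<in> {1..r}" for k
  proof (cases "k = 1")
    case False
    then have "k - 1 \<in> {1..r}" "k - 1 = i \<longleftrightarrow> k = i + 1" using k by auto
    then show ?thesis using cf_coxC[OF k] cf_f[OF i(1), of "k - 1"] cf_f[OF i(1), of r] i False by simp
  qed (use cf_coxC cf_f i in auto)
  moreover have "i - 1 \<in> {1..r}" "i - 1 \<noteq> i + 1" if "2 \<le> i" using i that by auto
  ultimately have "cf (refl_vec (f i) (C (f i))) i = 1"
    using cf_refl_vec_self[OF i(1), of "C (f i)"] Cf[of i] Cf[of "i + 1"] i by auto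
  then show "\<exists>\<beta>\<in>{f i}. coef ((refl_vec (f i) \<circ> C) \<beta>) \<alpha> \<ge> 1" if "\<alpha> \<in> {f i}" for \<alpha>
    using that by simp
qed (use f_in_simple_roots i in auto)

lemma gamma_neighbors_coxC:
  assumes "r \<ge> 2"
  shows "gamma_neighbors R \<Delta> C = {refl_vec (f r) \<circ> C}"
proof (intro equalityI subsetI)
  fix u assume "u \<in> gamma_neighbors R \<Delta> C"
  then obtain \<alpha> where u: "rational R \<Delta> u" "\<alpha> \<in> \<Delta>" "u = refl_vec \<alpha> \<circ> C"
    unfolding gamma_neighbors_def by blast
  then obtain i where i: "i \<in> {1..r}" "\<alpha> = f i" using simple_root_eq_f by blast
  then have "\<not> i < r" using not_rational_refl_vec_coxC u by blast
  then show "u \<in> {refl_vec (f r) \<circ> C}" using i u by simp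
next
  fix u assume "u \<in> {refl_vec (f r) \<circ> C}"
  moreover have "f r \<in> \<Delta>" using f_in_simple_roots assms by simp
  ultimately show "u \<in> gamma_neighbors R \<Delta> C"
    using rational_refl_vec_coxC[OF assms] unfolding gamma_neighbors_def by blast
qed

lemma typeA_numbering_reverse: "typeA_numbering \<Delta> (\<lambda>i. f (r + 1 - i))"
  unfolding typeA_numbering_def
proof (intro conjI ballI impI)
  have "bij_betw (\<lambda>i. r + 1 - i) {1..r} {1..r}"
    by (rule bij_betw_byWitness[where f' = "\<lambda>i. r + 1 - i"]) auto
  then show "bij_betw (\<lambda>i. f (r + 1 - i)) {1..r} \<Delta>"
    using bij_betw_trans[OF _ f_bij] by (simp add: comp_def)
next
  fix i j assume ij: "i \<in> {1..r}" "j \<in> {1..r}" "i \<noteq> j"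
  then have "r + 1 - i \<in> {1..r}" "r + 1 - j \<in> {1..r}" "r + 1 - i \<noteq> r + 1 - j"
    and "r + 1 - i = r + 1 - j + 1 \<or> r + 1 - j = r + 1 - i + 1 \<longleftrightarrow> i = j + 1 \<or> j = i + 1"
    by auto
  then show "cartan (f (r + 1 - i)) (f (r + 1 - j)) * cartan (f (r + 1 - j)) (f (r + 1 - i)) =
      (if i = j + 1 \<or> j = i + 1 then 1 else 0)"
    using typeA unfolding typeA_numbering_def by presburger
qed

lemma coxC_reverse: "coxC \<Delta> (\<lambda>i. f (r + 1 - i)) = inv C"
proof -
  have "map (\<lambda>i. f (r + 1 - i)) [1..<r + 1] = rev (map f [1..<r + 1])"
    by (rule nth_equalityI) (auto simp: rev_nth nth_upt Suc_diff_Suc simp del: upt_Suc)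
  moreover have "0 \<notin> set (map f [1..<r + 1])" using f_in_simple_roots simple_root_nonzero by auto
  ultimately show ?thesis by (simp add: coxC_def inv_refl_prod)
qed

lemma typeA_base_reverse: "typeA_base R \<Delta> (\<lambda>i. f (r + 1 - i))"
  by (intro typeA_base.intro based_root_system_axioms typeA_base_axioms.intro typeA_numbering_reverse)

lemma rational_inv_coxC: "rational R \<Delta> (inv C)"
  using typeA_base.rational_coxC[OF typeA_base_reverse] unfolding coxC_reverse .

lemma gamma_neighbors_inv_coxC:
  assumes "r \<ge> 2"
  shows "gamma_neighbors R \<Delta> (inv C) = {refl_vec (f 1) \<circ> inv C}"
  using typeA_base.gamma_neighbors_coxC[OF typeA_base_reverse assms] unfolding coxC_reverse by simp

end

context based_root_system
begin

lemma typeA_baseI: "typeA_numbering \<Delta> f \<Longrightarrow> typeA_base R \<Delta> f"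
  by (intro typeA_base.intro based_root_system_axioms typeA_base_axioms.intro)

lemma rational_coxeter_element_iff:
  assumes "indecomposable R" and "coxeter_element \<Delta> c"
  shows "rational R \<Delta> c \<longleftrightarrow> (\<exists>f. typeA_numbering \<Delta> f \<and> (c = coxC \<Delta> f \<or> c = inv (coxC \<Delta> f)))"
proof
  assume "rational R \<Delta> c"
  moreover obtain xs where xs: "distinct xs" "set xs = \<Delta>" "c = refl_prod xs"
    using assms(2) unfolding coxeter_element_def by blast
  ultimately have "typeA_numbering \<Delta> (\<lambda>i. xs ! (i - 1)) \<and> coxC \<Delta> (\<lambda>i. xs ! (i - 1)) = c"
    using typeA_numbering_nth[OF xs(1,2)] rational_coxeter_word_bonds[OF assms(1) xs(1,2)] by simp
  then show "\<exists>f. typeA_numbering \<Delta> f \<and> (c = coxC \<Delta> f \<or> c = inv (coxC \<Delta> f))" by metis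
next
  assume "\<exists>f. typeA_numbering \<Delta> f \<and> (c = coxC \<Delta> f \<or> c = inv (coxC \<Delta> f))"
  then show "rational R \<Delta> c"
    using typeA_base.rational_coxC typeA_base.rational_inv_coxC typeA_baseI by blast
qed

end

theorem proposition2p13:
  fixes R \<Delta> :: "'a::euclidean_space set"
  assumes "root_system R" and "base R \<Delta>" and "indecomposable R"
  shows "(\<forall>c. coxeter_element \<Delta> c \<longrightarrow>
            (rational R \<Delta> c \<longleftrightarrow>
              (\<exists>f. typeA_numbering \<Delta> f \<and> (c = coxC \<Delta> f \<or> c = inv (coxC \<Delta> f)))))
       \<and> (\<forall>f. typeA_numbering \<Delta> f \<and> card \<Delta> \<ge> 2 \<longrightarrow>
            gamma_neighbors R \<Delta> (coxC \<Delta> f) = {refl_vec (f (card \<Delta>)) \<circ> coxC \<Delta> f}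
          \<and> gamma_neighbors R \<Delta> (inv (coxC \<Delta> f)) = {refl_vec (f 1) \<circ> inv (coxC \<Delta> f)})"
proof -
  interpret based_root_system R \<Delta> using assms(1,2) by unfold_locales
  show ?thesis
    using rational_coxeter_element_iff[OF assms(3)] typeA_base.gamma_neighbors_coxC[OF typeA_baseI]
      typeA_base.gamma_neighbors_inv_coxC[OF typeA_baseI] by blast
qed

end
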